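(* Let $b$ be a positive integer and let $g:\mathbb{R}\to\mathbb{R}$ be a periodic field with period $1$, with $|g(x)|\le 1$ for all $x$, and bandlimited in the sense that $$g(x)=\sum_{k=-b}^{b} a[k]\, e^{j2\pi k x},\qquad a[k]=\int_0^1 g(x)e^{-j2\pi kx}\,dx .$$ Let $n>0$ and let $\lambda>1$ be a finite constant independent of $n$. Let $X_1,X_2,\dots$ be i.i.d. positive random variables (inter-sample spacings of a renewal process) with common distribution $X$ satisfying $\mathbb{E}(X)=1/n$ and whose distribution has support in $(0,\lambda/n]$. Let $S_i=X_1+\cdots+X_i$ and let $M$ be the random number of samples in $[0,1]$, i.e. $S_M\le 1<S_{M+1}$. Let $W(x)$ be a measurement-noise process, independent of $(X_i)_{i}$, such that for any distinct points $x_1,\dots,x_l$ the values $W(x_1),\dots,W(x_l)$ are i.i.d. with zero mean and finite variance $\sigma^2$. For $-b\le k\le b$ define $$\widehat{A}_{\mathrm{gen}}[k]:=\frac{1}{M}\sum_{i=1}^{M}\{g(S_i)+W(S_i)\}\exp\!\left(-\frac{j2\pi k i}{M}\right).$$ Then for each $-b\le k\le b$, $$\mathbb{E}\left[\left|\widehat{A}_{\mathrm{gen}}[k]-a[k]\right|^2\right]\le \frac{C}{n},$$ where $C$ is a constant independent of $n$ that depends on the renewal-process parameter $\lambda$ and the bandwidth parameter $b$. Consequently, with $\widehat{G}(x)=\sum_{k=-b}^{b}\widehat{A}_{\mathrm{gen}}[k]e^{j2\pi kx}$, the distortion $$D_{\mathrm{gen}}:=\mathbb{E}\left[\int_0^1|\widehat{G}(x)-g(x)|^2\,dx\right]=\sum_{k=-b}^{b}\mathbb{E}\left[|\widehat{A}_{\mathrm{gen}}[k]-a[k]|^2\right]$$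 satisfies $D_{\mathrm{gen}}\le (2b+1)C/n$, i.e. $D_{\mathrm{gen}}=O(1/n)$.
   Context: $j=\sqrt{-1}$. The sampling locations $S_1,\dots,S_M$ and the distribution of $X$ are unknown to the estimator; only the noisy readings $g(S_1)+W(S_1),\dots,g(S_M)+W(S_M)$ are used. The noise distribution is otherwise unknown. $M$ is a well-defined random variable (stopping rule $X_1+\cdots+X_M\le 1$ and $X_1+\cdots+X_{M+1}>1$). *)

theory Defs
  imports "HOL-Probability.Probability"
begin

text \<open>Renewal sampling: X 0, X 1, ... are the spacings X_1, X_2, ... of the paper
  (0-based), so renS X i = X_1 + ... + X_i = S_i and renS X 0 = 0.\<close>
definition renS :: "(nat \<Rightarrow> 'a \<Rightarrow> real) \<Rightarrow> nat \<Rightarrow> 'a \<Rightarrow> real" where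
  "renS X i \<omega> = (\<Sum>m<i. X m \<omega>)"

definition renM :: "(nat \<Rightarrow> 'a \<Rightarrow> real) \<Rightarrow> 'a \<Rightarrow> nat" where
  "renM X \<omega> = (LEAST m. renS X (Suc m) \<omega> > 1)"

definition fcoef :: "(real \<Rightarrow> real) \<Rightarrow> int \<Rightarrow> complex" where
  "fcoef g k = (LBINT x:{0..1}. complex_of_real (g x) * exp (- (\<i> * of_real (2 * pi * of_int k * x))))"

text \<open>Estimator; Z i is the measurement noise W(S_i) at the i-th sample point.\<close>
definition Ahat :: "(real \<Rightarrow> real) \<Rightarrow> (nat \<Rightarrow> 'a \<Rightarrow> real) \<Rightarrow> (nat \<Rightarrow> 'a \<Rightarrow> real) \<Rightarrow> int \<Rightarrow> 'a \<Rightarrow> complex" where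
  "Ahat g X Z k \<omega> =
     (let m = renM X \<omega> in
       (1 / of_nat m) * (\<Sum>i=1..m. complex_of_real (g (renS X i \<omega>) + Z i \<omega>)
                          * exp (- (\<i> * of_real (2 * pi * of_int k * of_nat i / of_nat m)))))"

definition Ghat :: "nat \<Rightarrow> (real \<Rightarrow> real) \<Rightarrow> (nat \<Rightarrow> 'a \<Rightarrow> real) \<Rightarrow> (nat \<Rightarrow> 'a \<Rightarrow> real) \<Rightarrow> real \<Rightarrow> 'a \<Rightarrow> complex" where
  "Ghat b g X Z x \<omega> = (\<Sum>k=- int b..int b. Ahat g X Z k \<omega> * exp (\<i> * of_real (2 * pi * of_int k * x)))"

end

theory Submission
  imports Defs
begin

text \<open>The error splits into a bias term, built from the signal at the random sample points, and a
  noise term. The number of samples M is a function of the spacings alone, hence independent of the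
  noise; on the event M = m the noise term is an average of m uncorrelated centred values, with
  second moment \<sigma>2 / m, and m is at least about n/lam.

  For the bias, once M > 2b the M-point DFT of the equispaced samples g(i/M) is exactly a[k], so the
  bias is bounded by the Lipschitz constant of the trigonometric polynomial g times the average of
  |S_i - i/M| \<le> |S_i - i/n| + |M/n - 1|. The first term has second moment at most i (lam/n)^2,
  because the spacings are independent with mean 1/n; the second has sub-Gaussian tails on the
  scale 1/sqrt n by Hoeffding's inequality for S_m. Parseval's identity turns the bounds on the
  coefficients into the bound on the distortion.\<close>

section \<open>Trigonometric polynomials\<close>

lemma norm_exp_i_diff_le: "cmod (exp (\<i> * of_real s) - exp (\<i> * of_real t)) \<le> \<bar>s - t\<bar>"
proof -
  have e: "exp (\<i> * of_real x) = Complex (cos x) (sin x)" for x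
    by (simp add: exp_eq_polar cis.ctr)
  have "(cmod (exp (\<i> * of_real s) - exp (\<i> * of_real t)))\<^sup>2 = (cos s - cos t)\<^sup>2 + (sin s - sin t)\<^sup>2"
    by (simp add: e cmod_def)
  also have "\<dots> = 2 - 2 * cos (s - t)"
    by (simp add: cos_diff power2_eq_square algebra_simps)
  also have "cos (s - t) = 1 - 2 * (sin ((s - t) / 2))\<^sup>2"
  proof -
    have "2 * ((s - t) / 2) = s - t" by simp
    thus ?thesis using cos_double_sin[of "(s - t) / 2"] by metis
  qed
  also have "2 - 2 * (1 - 2 * (sin ((s - t) / 2))\<^sup>2) = 4 * (sin ((s - t) / 2))\<^sup>2" by simp
  also have "\<dots> \<le> 4 * ((s - t) / 2)\<^sup>2"
    using abs_sin_x_le_abs_x[of "(s - t) / 2"]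
    by (intro mult_left_mono) (auto simp: abs_le_square_iff[symmetric] power2_abs)
  also have "\<dots> = \<bar>s - t\<bar>\<^sup>2" by (simp add: power2_eq_square)
  finally show ?thesis by (simp add: abs_le_square_iff[symmetric])
qed

lemma norm_fcoef_le_1:
  assumes "\<And>x. \<bar>g x\<bar> \<le> 1"
  shows "cmod (fcoef g k) \<le> 1"
proof -
  let ?f = "\<lambda>x. indicator {0..1::real} x *\<^sub>R (complex_of_real (g x) * exp (- (\<i> * of_real (2 * pi * of_int k * x))))"
  have "cmod (fcoef g k) \<le> integral\<^sup>L lborel (\<lambda>x. norm (?f x))"
    unfolding fcoef_def set_lebesgue_integral_def by (rule integral_norm_bound)
  also have "\<dots> \<le> 1"
  proof (cases "integrable lborel (\<lambda>x. norm (?f x))")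
    case True
    have "integral\<^sup>L lborel (\<lambda>x. norm (?f x)) \<le> integral\<^sup>L lborel (indicator {0..1::real})"
      using True assms by (intro integral_mono) (auto simp: indicator_def norm_mult)
    thus ?thesis by simp
  qed (simp add: not_integrable_integral_eq)
  finally show ?thesis .
qed

definition lipschitz_bound :: "nat \<Rightarrow> real" where
  "lipschitz_bound b = 2 * pi * real b * (2 * real b + 1)"

lemma lipschitz_bound_nonneg: "0 \<le> lipschitz_bound b"
  by (simp add: lipschitz_bound_def)

lemma bandlimited_lipschitz:
  fixes g :: "real \<Rightarrow> real" and b :: nat
  assumes g_bound: "\<And>x. \<bar>g x\<bar> \<le> 1"
    and g_expansion: "\<And>x. complex_of_real (g x) = (\<Sum>k=- int b..int b. fcoef g k * exp (\<i> * of_real (2 * pi * of_int k * x)))"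
  shows "\<bar>g x - g y\<bar> \<le> lipschitz_bound b * \<bar>x - y\<bar>"
proof -
  let ?e = "\<lambda>k x. exp (\<i> * of_real (2 * pi * of_int k * x))"
  have "complex_of_real (g x - g y) = (\<Sum>k=- int b..int b. fcoef g k * (?e k x - ?e k y))"
    by (simp add: g_expansion[of x] g_expansion[of y] sum_subtractf[symmetric] algebra_simps)
  hence "\<bar>g x - g y\<bar> = cmod (\<Sum>k=- int b..int b. fcoef g k * (?e k x - ?e k y))"
    by (metis norm_of_real)
  also have "\<dots> \<le> (\<Sum>k=- int b..int b. cmod (fcoef g k * (?e k x - ?e k y)))"
    by (rule norm_sum)
  also have "\<dots> \<le> (\<Sum>k=- int b..int b. 2 * pi * real b * \<bar>x - y\<bar>)"
  proof (rule sum_mono)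
    fix k assume k: "k \<in> {- int b..int b}"
    have "cmod (fcoef g k * (?e k x - ?e k y)) \<le> 1 * \<bar>2 * pi * of_int k * x - 2 * pi * of_int k * y\<bar>"
      unfolding norm_mult by (intro mult_mono norm_fcoef_le_1 g_bound norm_exp_i_diff_le) auto
    also have "\<dots> = 2 * pi * \<bar>of_int k\<bar> * \<bar>x - y\<bar>"
      by (simp add: abs_mult right_diff_distrib[symmetric] mult.assoc)
    also have "\<dots> \<le> 2 * pi * real b * \<bar>x - y\<bar>"
      using k by (intro mult_right_mono mult_left_mono) auto
    finally show "cmod (fcoef g k * (?e k x - ?e k y)) \<le> 2 * pi * real b * \<bar>x - y\<bar>" .
  qed
  also have "\<dots> = lipschitz_bound b * \<bar>x - y\<bar>" by (simp add: lipschitz_bound_def)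
  finally show ?thesis .
qed

lemma sum_exp_roots_of_unity:
  assumes m: "m > 0" and d: "\<bar>d\<bar> < int m"
  shows "(\<Sum>i=1..m. exp (\<i> * of_real (2 * pi * of_int d * of_nat i / of_nat m))) = (if d = 0 then of_nat m else 0)"
proof (cases "d = 0")
  case False
  define w where "w = exp (\<i> * of_real (2 * pi * of_int d / of_nat m))"
  have pw: "exp (\<i> * of_real (2 * pi * of_int d * of_nat i / of_nat m)) = w ^ i" for i :: nat
    unfolding w_def exp_of_nat_mult[symmetric] by (simp add: algebra_simps)
  have "w ^ m = exp (\<i> * of_real (2 * pi * of_int d))"
    using pw[of m] m by simp
  also have "\<dots> = 1" by (subst exp_eq_1) auto
  finally have wm: "w ^ m = 1" .
  have "w \<noteq> 1"
  proof
    assume "w = 1"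
    then obtain j :: int where "2 * pi * of_int d / of_nat m = of_int (2 * j) * pi"
      unfolding w_def by (subst (asm) exp_eq_1) auto
    hence "of_int d = real m * of_int j" using m by (simp add: field_simps)
    hence "d = int m * j" by (metis of_int_eq_iff of_int_mult of_int_of_nat_eq)
    thus False using d False
      by (metis abs_mult abs_of_nat less_le mult.right_neutral mult_cancel_left mult_le_cancel_left1 mult_zero_right
          of_nat_0_less_iff zero_less_abs_iff int_one_le_iff_zero_less abs_ge_zero linorder_not_le m)
  qed
  moreover have "(1 - w) * (\<Sum>i=1..m. w ^ i) = 0"
    using m wm by (subst sum_gp_multiplied) auto
  ultimately show ?thesis using False pw by simp
qed simp

lemma set_integral_exp_int_freq:
  fixes j :: int
  shows "(LBINT x:{0..1::real}. exp (\<i> * of_real (2 * pi * of_int j * x))) = (if j = 0 then 1 else 0)"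
proof (cases "j = 0")
  case True thus ?thesis by (simp add: set_lebesgue_integral_def)
next
  case False
  define c where "c = \<i> * of_real (2 * pi * of_int j)"
  have c0: "c \<noteq> 0" using False by (simp add: c_def)
  have e: "exp (\<i> * of_real (2 * pi * of_int j * x)) = exp (c * of_real x)" for x
    by (simp add: c_def mult.assoc)
  have "((\<lambda>x. exp (c * of_real x)) has_integral ((\<lambda>x. exp (c * of_real x) / c) 1 - (\<lambda>x. exp (c * of_real x) / c) 0)) {0..1}"
  proof (rule fundamental_theorem_of_calculus)
    fix x :: real
    have "((\<lambda>z. exp (c * z) / c) has_field_derivative exp (c * of_real x)) (at (of_real x))"
      using c0 by (auto intro!: derivative_eq_intros)
    thus "((\<lambda>x. exp (c * of_real x) / c) has_vector_derivative exp (c * of_real x)) (at x within {0..1})"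
      by (rule has_vector_derivative_real_field)
  qed simp
  moreover have "exp c = 1" unfolding c_def by (subst exp_eq_1) auto
  ultimately have "integral {0..1} (\<lambda>x. exp (\<i> * of_real (2 * pi * of_int j * x))) = 0"
    unfolding e by (simp add: integral_unique)
  moreover have "set_integrable lborel {0..1::real} (\<lambda>x. exp (\<i> * of_real (2 * pi * of_int j * x)))"
    by (intro borel_integrable_atLeastAtMost' continuous_intros)
  ultimately show ?thesis using False by (simp only: set_borel_integral_eq_integral(2)) simp
qed

lemma parseval_trig_poly:
  fixes d :: "int \<Rightarrow> complex" and b :: nat
  shows "(LBINT x:{0..1::real}. (cmod (\<Sum>k=- int b..int b. d k * exp (\<i> * of_real (2 * pi * of_int k * x))))\<^sup>2)
       = (\<Sum>k=- int b..int b. (cmod (d k))\<^sup>2)"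
proof -
  let ?K = "{- int b..int b}"
  define e where "e = (\<lambda>(k::int) (x::real). exp (\<i> * of_real (2 * pi * of_int k * x)))"
  have e_mult_cnj: "e k x * cnj (e l x) = e (k - l) x" for k l x
  proof -
    have c: "cnj (exp (\<i> * complex_of_real t)) = exp (- (\<i> * complex_of_real t))" for t
      by (simp add: exp_cnj)
    show ?thesis unfolding e_def c by (simp add: exp_add[symmetric] algebra_simps)
  qed
  have sq: "complex_of_real ((cmod (\<Sum>k\<in>?K. d k * e k x))\<^sup>2) = (\<Sum>k\<in>?K. \<Sum>l\<in>?K. d k * cnj (d l) * e (k - l) x)" for x
    unfolding complex_norm_square cnj_sum sum_distrib_right sum_distrib_left
    by (subst sum.swap) (intro sum.cong refl, simp add: e_mult_cnj[symmetric] algebra_simps)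
  have e_integrable: "set_integrable lborel {0..1::real} (e j)" for j
    unfolding e_def by (intro borel_integrable_atLeastAtMost' continuous_intros)
  have "complex_of_real (LBINT x:{0..1::real}. (cmod (\<Sum>k\<in>?K. d k * e k x))\<^sup>2)
     = (LBINT x:{0..1::real}. (\<Sum>k\<in>?K. \<Sum>l\<in>?K. d k * cnj (d l) * e (k - l) x))"
    by (simp only: set_integral_complex_of_real[symmetric] sq)
  also have "\<dots> = (\<Sum>k\<in>?K. \<Sum>l\<in>?K. d k * cnj (d l) * (LBINT x:{0..1::real}. e (k - l) x))"
  proof -
    have e_integrable': "integrable lborel (\<lambda>x. indicator {0..1::real} x *\<^sub>R e j x)" for j
      using e_integrable[of j] unfolding set_integrable_def .
    have "(\<lambda>x. indicator {0..1::real} x *\<^sub>R (\<Sum>k\<in>?K. \<Sum>l\<in>?K. d k * cnj (d l) * e (k - l) x))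
       = (\<lambda>x. \<Sum>k\<in>?K. \<Sum>l\<in>?K. d k * cnj (d l) * (indicator {0..1::real} x *\<^sub>R e (k - l) x))"
      by (simp add: fun_eq_iff scaleR_conv_of_real sum_distrib_left algebra_simps)
    moreover have "integral\<^sup>L lborel (\<lambda>x. \<Sum>k\<in>?K. \<Sum>l\<in>?K. d k * cnj (d l) * (indicator {0..1::real} x *\<^sub>R e (k - l) x))
       = (\<Sum>k\<in>?K. \<Sum>l\<in>?K. d k * cnj (d l) * integral\<^sup>L lborel (\<lambda>x. indicator {0..1::real} x *\<^sub>R e (k - l) x))"
      by (simp only: Bochner_Integration.integral_sum Bochner_Integration.integrable_sum
          Bochner_Integration.integrable_mult_right e_integrable' integral_mult_right_zero)
    ultimately show ?thesis unfolding set_lebesgue_integral_def by simp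
  qed
  also have "\<dots> = (\<Sum>k\<in>?K. \<Sum>l\<in>?K. if l = k then d k * cnj (d l) else 0)"
    by (intro sum.cong refl) (simp only: e_def set_integral_exp_int_freq, simp)
  also have "\<dots> = (\<Sum>k\<in>?K. d k * cnj (d k))" by simp
  also have "\<dots> = complex_of_real (\<Sum>k\<in>?K. (cmod (d k))\<^sup>2)"
    unfolding of_real_sum by (simp only: complex_norm_square)
  finally show ?thesis unfolding e_def using of_real_eq_iff by blast
qed

lemma dft_bandlimited_samples:
  fixes g :: "real \<Rightarrow> real" and b m :: nat and k :: int
  assumes g_expansion: "\<And>x. complex_of_real (g x) = (\<Sum>k=- int b..int b. fcoef g k * exp (\<i> * of_real (2 * pi * of_int k * x)))"
    and m: "m > 2 * b" and k: "k \<in> {- int b..int b}"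
  shows "(\<Sum>i=1..m. complex_of_real (g (real i / real m)) * exp (- (\<i> * of_real (2 * pi * of_int k * of_nat i / of_nat m))))
     = of_nat m * fcoef g k"
proof -
  let ?K = "{- int b..int b}"
  have "(\<Sum>i=1..m. complex_of_real (g (real i / real m)) * exp (- (\<i> * of_real (2 * pi * of_int k * of_nat i / of_nat m))))
     = (\<Sum>i=1..m. \<Sum>l\<in>?K. fcoef g l * exp (\<i> * of_real (2 * pi * of_int (l - k) * of_nat i / of_nat m)))"
  proof (intro sum.cong refl)
    fix i
    have "exp (\<i> * of_real (2 * pi * of_int l * (real i / real m))) * exp (- (\<i> * of_real (2 * pi * of_int k * of_nat i / of_nat m)))
        = exp (\<i> * of_real (2 * pi * of_int (l - k) * of_nat i / of_nat m))" for l
      by (simp add: exp_add[symmetric] exp_minus[symmetric] algebra_simps diff_divide_distrib)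
    thus "complex_of_real (g (real i / real m)) * exp (- (\<i> * of_real (2 * pi * of_int k * of_nat i / of_nat m)))
       = (\<Sum>l\<in>?K. fcoef g l * exp (\<i> * of_real (2 * pi * of_int (l - k) * of_nat i / of_nat m)))"
      unfolding g_expansion sum_distrib_right by (simp add: mult.assoc)
  qed
  also have "\<dots> = (\<Sum>l\<in>?K. fcoef g l * (\<Sum>i=1..m. exp (\<i> * of_real (2 * pi * of_int (l - k) * of_nat i / of_nat m))))"
    by (subst sum.swap) (simp add: sum_distrib_left)
  also have "\<dots> = (\<Sum>l\<in>?K. fcoef g l * (if l - k = 0 then of_nat m else 0))"
  proof (intro sum.cong refl)
    fix l assume "l \<in> ?K"
    hence "\<bar>l - k\<bar> < int m" using k m by auto
    thus "fcoef g l * (\<Sum>i=1..m. exp (\<i> * of_real (2 * pi * of_int (l - k) * of_nat i / of_nat m)))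
        = fcoef g l * (if l - k = 0 then of_nat m else 0)"
      using m by (subst sum_exp_roots_of_unity) auto
  qed
  also have "\<dots> = of_nat m * fcoef g k" using k by (simp add: if_distrib cong: if_cong)
  finally show ?thesis .
qed

lemma norm_dft_perturbed_samples_le:
  fixes g :: "real \<Rightarrow> real" and s :: "nat \<Rightarrow> real" and b m :: nat and k :: int
  assumes g_bound: "\<And>x. \<bar>g x\<bar> \<le> 1"
    and g_expansion: "\<And>x. complex_of_real (g x) = (\<Sum>k=- int b..int b. fcoef g k * exp (\<i> * of_real (2 * pi * of_int k * x)))"
    and m: "m > 2 * b" and k: "k \<in> {- int b..int b}"
  shows "cmod ((1 / of_nat m) * (\<Sum>i=1..m. complex_of_real (g (s i)) * exp (- (\<i> * of_real (2 * pi * of_int k * of_nat i / of_nat m))))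
           - fcoef g k)
         \<le> lipschitz_bound b * ((1 / real m) * (\<Sum>i=1..m. \<bar>s i - real i / real m\<bar>))"
proof -
  define w where "w i = exp (- (\<i> * of_real (2 * pi * of_int k * of_nat i / of_nat m)))" for i :: nat
  have "(1 / of_nat m) * (\<Sum>i=1..m. complex_of_real (g (s i)) * w i) - fcoef g k
      = (1 / of_nat m) * (\<Sum>i=1..m. complex_of_real (g (s i)) * w i) - (1 / of_nat m) * (of_nat m * fcoef g k)"
    using m by simp
  also have "\<dots> = (1 / of_nat m) * (\<Sum>i=1..m. complex_of_real (g (s i) - g (real i / real m)) * w i)"
    unfolding w_def dft_bandlimited_samples[OF g_expansion m k, symmetric]
    by (simp add: sum_subtractf left_diff_distrib right_diff_distrib)
  finally have eq: "(1 / of_nat m) * (\<Sum>i=1..m. complex_of_real (g (s i)) * w i) - fcoef g k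
      = (1 / of_nat m) * (\<Sum>i=1..m. complex_of_real (g (s i) - g (real i / real m)) * w i)" .
  have "cmod (\<Sum>i=1..m. complex_of_real (g (s i) - g (real i / real m)) * w i)
      \<le> (\<Sum>i=1..m. lipschitz_bound b * \<bar>s i - real i / real m\<bar>)"
    by (intro order_trans[OF norm_sum sum_mono])
       (simp add: w_def norm_mult bandlimited_lipschitz[OF g_bound g_expansion] del: of_real_diff)
  hence "cmod ((1 / of_nat m) * (\<Sum>i=1..m. complex_of_real (g (s i)) * w i) - fcoef g k)
      \<le> (1 / real m) * (\<Sum>i=1..m. lipschitz_bound b * \<bar>s i - real i / real m\<bar>)"
    unfolding eq by (simp add: norm_mult norm_divide divide_right_mono)
  thus ?thesis by (simp add: w_def sum_distrib_left)
qed

section \<open>Partial sums of the spacings\<close>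

lemma renS_mono:
  assumes "\<forall>m. 0 \<le> X m \<omega>" "i \<le> j"
  shows "renS X i \<omega> \<le> renS X j \<omega>"
  unfolding renS_def using assms by (intro sum_mono2) auto

lemma renS_le_linear:
  assumes "\<forall>m. X m \<omega> \<le> c"
  shows "renS X i \<omega> \<le> real i * c"
  unfolding renS_def using assms sum_mono[of "{..<i}" "\<lambda>m. X m \<omega>" "\<lambda>_. c"] by simp

lemma renM_crossing:
  assumes "\<exists>m. 1 < renS X m \<omega>"
  shows "renS X (renM X \<omega>) \<omega> \<le> 1" and "1 < renS X (Suc (renM X \<omega>)) \<omega>"
proof -
  from assms obtain m where m: "1 < renS X m \<omega>" by blast
  then obtain m' where "m = Suc m'" by (cases m) (auto simp: renS_def)
  with m show "1 < renS X (Suc (renM X \<omega>)) \<omega>"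
    unfolding renM_def by (metis LeastI_ex)
  show "renS X (renM X \<omega>) \<omega> \<le> 1"
  proof (cases "renM X \<omega>")
    case (Suc j)
    hence "\<not> 1 < renS X (Suc j) \<omega>" unfolding renM_def by (metis lessI not_less_Least)
    thus ?thesis using Suc by simp
  qed (simp add: renS_def)
qed

lemma renS_le_1_iff:
  assumes nonneg: "\<forall>m. 0 \<le> X m \<omega>" and crossing: "\<exists>m. 1 < renS X m \<omega>"
  shows "renS X m \<omega> \<le> 1 \<longleftrightarrow> m \<le> renM X \<omega>"
proof
  assume "m \<le> renM X \<omega>"
  thus "renS X m \<omega> \<le> 1"
    using renS_mono[where X=X and \<omega>=\<omega>, OF nonneg] renM_crossing(1)[OF crossing] order_trans by blast
next
  assume "renS X m \<omega> \<le> 1"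
  show "m \<le> renM X \<omega>"
  proof (rule ccontr)
    assume "\<not> m \<le> renM X \<omega>"
    hence "renS X (Suc (renM X \<omega>)) \<omega> \<le> renS X m \<omega>"
      by (intro renS_mono[where X=X and \<omega>=\<omega>, OF nonneg]) simp
    thus False using renM_crossing(2)[OF crossing] \<open>renS X m \<omega> \<le> 1\<close> by simp
  qed
qed

lemma renM_eq_iff:
  assumes "\<forall>m. 0 \<le> X m \<omega>" "\<exists>m. 1 < renS X m \<omega>"
  shows "renM X \<omega> = m \<longleftrightarrow> 1 < renS X (Suc m) \<omega> \<and> (\<forall>j<m. renS X (Suc j) \<omega> \<le> 1)"
proof -
  have "(\<forall>j<m. Suc j \<le> renM X \<omega>) \<longleftrightarrow> m \<le> renM X \<omega>"
    by (cases m) auto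
  thus ?thesis unfolding renS_le_1_iff[OF assms] not_le[symmetric] by auto
qed

lemma le_0_if_eventually_le_exp:
  fixes p c :: real
  assumes c: "c > 0" and bound: "\<And>m::nat. m \<ge> N \<Longrightarrow> p \<le> exp (- real m / c)"
  shows "p \<le> 0"
proof (rule ccontr)
  assume "\<not> p \<le> 0" hence p: "p > 0" by simp
  obtain m :: nat where m: "m > max (real N) (- c * ln p)" using reals_Archimedean2 by blast
  hence "- real m / c < ln p" using c by (simp add: field_simps)
  hence "exp (- real m / c) < p" using p by (metis exp_less_cancel_iff exp_ln)
  moreover have "m \<ge> N" using m by simp
  ultimately show False using bound by force
qed

lemma square_add_le: "((x::real) + y)\<^sup>2 \<le> 2 * x\<^sup>2 + 2 * y\<^sup>2"
  using zero_le_power2[of "x - y"] by (simp add: power2_eq_square algebra_simps)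

lemma sum_odd_numbers: "(\<Sum>j\<le>J. 2 * real j + 1) = (real J + 1)\<^sup>2"
  by (induction J) (auto simp: power2_eq_square algebra_simps)

lemma square_le_sum_odd_numbers:
  fixes t :: real
  assumes t: "0 \<le> t"
  shows "ennreal (t\<^sup>2) \<le> (\<Sum>j. if real j \<le> t then ennreal (2 * real j + 1) else 0)"
proof -
  define J where "J = nat \<lfloor>t\<rfloor>"
  have J: "real J \<le> t" "t < real J + 1" using t unfolding J_def by (simp_all add: of_nat_nat)
  have "(\<Sum>j. if real j \<le> t then ennreal (2 * real j + 1) else 0)
      = (\<Sum>j\<in>{..J}. if real j \<le> t then ennreal (2 * real j + 1) else 0)"
    using J by (intro suminf_finite) auto
  also have "\<dots> = (\<Sum>j\<in>{..J}. ennreal (2 * real j + 1))"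
    using J by (intro sum.cong refl) auto
  also have "\<dots> = ennreal (\<Sum>j\<le>J. 2 * real j + 1)" by (rule sum_ennreal) simp
  also have "\<dots> = ennreal ((real J + 1)\<^sup>2)" by (simp only: sum_odd_numbers)
  finally show ?thesis using J t by (auto intro!: ennreal_leI power_mono)
qed

definition gauss_tail_weight :: "real \<Rightarrow> nat \<Rightarrow> real" where
  "gauss_tail_weight lam j = (2 * real j + 1) * (2 * exp (- (real j)\<^sup>2 / (4 * lam\<^sup>2)))"

lemma gauss_tail_weight_nonneg: "0 \<le> gauss_tail_weight lam j"
  unfolding gauss_tail_weight_def by simp

lemma summable_gauss_tail_weight:
  assumes lam: "lam > 0"
  shows "summable (gauss_tail_weight lam)"
proof (rule summable_comparison_test')
  show "summable (\<lambda>j. (384 * lam ^ 4) * inverse (real j ^ 2))"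
    by (intro summable_mult inverse_power_summable) simp
  fix j :: nat assume j: "j \<ge> 1"
  define a where "a = 1 / (4 * lam\<^sup>2)"
  have a: "a > 0" using lam by (simp add: a_def)
  have e: "exp (- (real j)\<^sup>2 / (4 * lam\<^sup>2)) = inverse (exp (a * (real j)\<^sup>2))"
    by (simp add: a_def exp_minus[symmetric])
  have q: "(a * (real j)\<^sup>2 / 2)\<^sup>2 \<le> exp (a * (real j)\<^sup>2)"
  proof -
    have "a * (real j)\<^sup>2 / 2 \<le> exp (a * (real j)\<^sup>2 / 2)"
      using exp_ge_add_one_self[of "a * (real j)\<^sup>2 / 2"] by linarith
    hence "(a * (real j)\<^sup>2 / 2)\<^sup>2 \<le> (exp (a * (real j)\<^sup>2 / 2))\<^sup>2"
      using a by (intro power_mono) auto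
    thus ?thesis by (simp add: power2_eq_square exp_add[symmetric])
  qed
  have "norm (gauss_tail_weight lam j) = (2 * real j + 1) * 2 * inverse (exp (a * (real j)\<^sup>2))"
    unfolding gauss_tail_weight_def e by simp
  also have "\<dots> \<le> (3 * real j) * 2 * inverse ((a * (real j)\<^sup>2 / 2)\<^sup>2)"
    using j q a by (intro mult_mono le_imp_inverse_le) auto
  also have "\<dots> = (24 / a\<^sup>2) * inverse (real j ^ 3)"
    using j a by (simp add: field_simps power2_eq_square power3_eq_cube)
  also have "\<dots> \<le> (24 / a\<^sup>2) * inverse (real j ^ 2)"
    using j a by (intro mult_left_mono le_imp_inverse_le power_increasing) auto
  also have "24 / a\<^sup>2 = 384 * lam ^ 4" using lam by (simp add: a_def field_simps power2_eq_square eval_nat_numeral)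
  finally show "norm (gauss_tail_weight lam j) \<le> (384 * lam ^ 4) * inverse (real j ^ 2)" .
qed

lemma hoeffding_exponent_le:
  fixes n lam m K t \<epsilon> :: real
  assumes "0 < n" "0 < lam" "0 < m" "m \<le> K * n" "0 \<le> t" "t \<le> \<epsilon>"
  shows "- 2 * \<epsilon>\<^sup>2 / (m * (lam / n)\<^sup>2) \<le> - 2 * t\<^sup>2 * n / (K * lam\<^sup>2)"
proof -
  have K: "K > 0" using assms by (smt (verit) mult_nonpos_nonneg)
  have c: "0 < (lam / n)\<^sup>2" using assms by simp
  have "2 * t\<^sup>2 * n / (K * lam\<^sup>2) = 2 * t\<^sup>2 / (K * n * (lam / n)\<^sup>2)"
    using assms K by (simp add: field_simps power2_eq_square)
  also have "\<dots> \<le> 2 * t\<^sup>2 / (m * (lam / n)\<^sup>2)"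
    using assms c K by (intro divide_left_mono mult_right_mono mult_pos_pos) auto
  also have "\<dots> \<le> 2 * \<epsilon>\<^sup>2 / (m * (lam / n)\<^sup>2)"
    using assms c by (intro divide_right_mono power_mono) auto
  finally show ?thesis by simp
qed

lemma cmod_sum_real_mult_sq:
  fixes a :: "'i \<Rightarrow> real" and w :: "'i \<Rightarrow> complex"
  shows "(cmod (\<Sum>i\<in>I. of_real (a i) * w i))\<^sup>2 = (\<Sum>i\<in>I. \<Sum>j\<in>I. a i * a j * Re (w i * cnj (w j)))"
proof -
  have "complex_of_real ((cmod (\<Sum>i\<in>I. of_real (a i) * w i))\<^sup>2)
      = (\<Sum>i\<in>I. \<Sum>j\<in>I. of_real (a i * a j) * (w i * cnj (w j)))"
    unfolding complex_norm_square cnj_sum sum_distrib_right sum_distrib_left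
    by (subst sum.swap, intro sum.cong refl, simp add: algebra_simps)
  hence "(cmod (\<Sum>i\<in>I. of_real (a i) * w i))\<^sup>2 = Re (\<Sum>i\<in>I. \<Sum>j\<in>I. of_real (a i * a j) * (w i * cnj (w j)))"
    by (metis Re_complex_of_real)
  also have "\<dots> = (\<Sum>i\<in>I. \<Sum>j\<in>I. a i * a j * Re (w i * cnj (w j)))"
    by (simp add: Re_sum)
  finally show ?thesis .
qed

section \<open>Renewal sampling\<close>

locale renewal_sampling = prob_space P for P :: "'a measure" +
  fixes lam n \<sigma>2 :: real and X Z :: "nat \<Rightarrow> 'a \<Rightarrow> real"
  assumes lam_gt_1: "lam > 1" and n_pos: "n > 0"
    and indep: "indep_vars (\<lambda>_. borel) (\<lambda>i. case i of Inl m \<Rightarrow> X m | Inr m \<Rightarrow> Z m) UNIV"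
    and distr_X: "\<And>m. distr P borel (X m) = distr P borel (X 0)"
    and distr_Z: "\<And>m. distr P borel (Z m) = distr P borel (Z 0)"
    and AE_X0_bounds: "AE \<omega> in P. 0 < X 0 \<omega> \<and> X 0 \<omega> \<le> lam / n"
    and expectation_X0: "expectation (X 0) = 1 / n"
    and integrable_Z0_sq: "integrable P (\<lambda>\<omega>. (Z 0 \<omega>)\<^sup>2)"
    and expectation_Z0: "expectation (Z 0) = 0"
    and expectation_Z0_sq: "expectation (\<lambda>\<omega>. (Z 0 \<omega>)\<^sup>2) = \<sigma>2"
begin

abbreviation Y :: "nat + nat \<Rightarrow> 'a \<Rightarrow> real" where
  "Y \<equiv> (\<lambda>i. case i of Inl m \<Rightarrow> X m | Inr m \<Rightarrow> Z m)"

lemma measurable_Y: "Y i \<in> borel_measurable P"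
  using indep unfolding indep_vars_def by blast

lemma measurable_X [measurable]: "X m \<in> borel_measurable P"
  using measurable_Y[of "Inl m"] by simp

lemma measurable_Z [measurable]: "Z m \<in> borel_measurable P"
  using measurable_Y[of "Inr m"] by simp

lemma measurable_renS [measurable]: "renS X m \<in> borel_measurable P"
  unfolding renS_def by measurable

lemma measurable_renM [measurable]: "renM X \<in> measurable P (count_space UNIV)"
  unfolding renM_def by measurable

lemma AE_X_bounds: "AE \<omega> in P. 0 < X m \<omega> \<and> X m \<omega> \<le> lam / n"
proof -
  have "AE x in distr P borel (X 0). 0 < x \<and> x \<le> lam / n"
    using AE_X0_bounds by (subst AE_distr_iff) auto
  hence "AE x in distr P borel (X m). 0 < x \<and> x \<le> lam / n" by (subst distr_X)
  thus ?thesis by (subst (asm) AE_distr_iff) auto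
qed

lemma integrable_X: "integrable P (X m)"
  by (rule integrable_const_bound[where B = "lam / n"], rule eventually_mono[OF AE_X_bounds[of m]]) auto

lemma expectation_X: "expectation (X m) = 1 / n"
proof -
  have "expectation (X m) = integral\<^sup>L (distr P borel (X m)) (\<lambda>x. x)"
    by (subst integral_distr) auto
  also have "\<dots> = integral\<^sup>L (distr P borel (X 0)) (\<lambda>x. x)" using distr_X[of m] by simp
  also have "\<dots> = 1 / n" using expectation_X0 by (subst integral_distr) auto
  finally show ?thesis .
qed

lemma integrable_Z_sq: "integrable P (\<lambda>\<omega>. (Z m \<omega>)\<^sup>2)"
proof -
  have "integrable (distr P borel (Z 0)) (\<lambda>x. x\<^sup>2)" using integrable_Z0_sq by (subst integrable_distr_eq) auto
  hence "integrable (distr P borel (Z m)) (\<lambda>x. x\<^sup>2)" using distr_Z[of m] by simp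
  thus ?thesis by (subst (asm) integrable_distr_eq) auto
qed

lemma integrable_Z: "integrable P (Z m)"
  by (rule square_integrable_imp_integrable[OF _ integrable_Z_sq]) auto

lemma expectation_Z: "expectation (Z m) = 0"
proof -
  have "expectation (Z m) = integral\<^sup>L (distr P borel (Z m)) (\<lambda>x. x)"
    by (subst integral_distr) auto
  also have "\<dots> = integral\<^sup>L (distr P borel (Z 0)) (\<lambda>x. x)" using distr_Z[of m] by simp
  also have "\<dots> = 0" using expectation_Z0 by (subst integral_distr) auto
  finally show ?thesis .
qed

lemma expectation_Z_sq: "expectation (\<lambda>\<omega>. (Z m \<omega>)\<^sup>2) = \<sigma>2"
proof -
  have "expectation (\<lambda>\<omega>. (Z m \<omega>)\<^sup>2) = integral\<^sup>L (distr P borel (Z m)) (\<lambda>x. x\<^sup>2)"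
    by (subst integral_distr) auto
  also have "\<dots> = integral\<^sup>L (distr P borel (Z 0)) (\<lambda>x. x\<^sup>2)" using distr_Z[of m] by simp
  also have "\<dots> = \<sigma>2" using expectation_Z0_sq by (subst integral_distr) auto
  finally show ?thesis .
qed

lemma sigma2_nonneg: "0 \<le> \<sigma>2"
  using expectation_Z0_sq Bochner_Integration.integral_nonneg[of P "\<lambda>\<omega>. (Z 0 \<omega>)\<^sup>2"] by simp

lemma indep_var_Y:
  assumes "i \<noteq> j"
  shows "indep_var borel (Y i) borel (Y j)"
proof -
  have "indep_var (PiM {i} (\<lambda>_. borel)) (\<lambda>\<omega>. restrict (\<lambda>i. Y i \<omega>) {i})
                  (PiM {j} (\<lambda>_. borel)) (\<lambda>\<omega>. restrict (\<lambda>i. Y i \<omega>) {j})"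
    using assms by (intro indep_var_restrict[OF indep]) auto
  hence "indep_var borel ((\<lambda>f. f i) \<circ> (\<lambda>\<omega>. restrict (\<lambda>i. Y i \<omega>) {i}))
                   borel ((\<lambda>f. f j) \<circ> (\<lambda>\<omega>. restrict (\<lambda>i. Y i \<omega>) {j}))"
    by (rule indep_var_compose) auto
  thus ?thesis by (simp add: comp_def)
qed

lemma hoeffding_renS:
  assumes m: "m \<ge> 1" and \<epsilon>: "\<epsilon> \<ge> 0"
  shows "prob {\<omega>\<in>space P. renS X m \<omega> \<le> real m / n - \<epsilon>} \<le> exp (- 2 * \<epsilon>\<^sup>2 / (real m * (lam / n)\<^sup>2))"
    and "prob {\<omega>\<in>space P. renS X m \<omega> \<ge> real m / n + \<epsilon>} \<le> exp (- 2 * \<epsilon>\<^sup>2 / (real m * (lam / n)\<^sup>2))"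
proof -
  let ?I = "Inl ` {..<m} :: (nat + nat) set"
  interpret H: Hoeffding_ineq P ?I Y "\<lambda>_. 0" "\<lambda>_. lam / n" "\<Sum>i\<in>?I. expectation (Y i)"
  proof unfold_locales
    show "indep_vars (\<lambda>_. borel) Y ?I" by (rule indep_vars_subset[OF indep]) auto
    fix i assume "i \<in> ?I"
    then obtain l where "i = Inl l" by auto
    thus "AE x in P. Y i x \<in> {0..lam / n}" using AE_X_bounds[of l] by (auto elim!: eventually_mono)
  qed auto
  have mean: "(\<Sum>i\<in>?I. expectation (Y i)) = real m / n"
    by (subst sum.reindex) (auto simp: expectation_X)
  have sum: "(\<Sum>i\<in>?I. Y i x) = renS X m x" for x
    by (subst sum.reindex) (auto simp: renS_def)
  have width: "(\<Sum>i\<in>?I. (lam / n - 0)\<^sup>2) = real m * (lam / n)\<^sup>2"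
    by (subst sum.reindex) auto
  have "0 < real m * (lam / n)\<^sup>2" using m lam_gt_1 n_pos by simp
  from H.Hoeffding_ineq_le[OF \<epsilon>, unfolded width mean sum, OF this]
       H.Hoeffding_ineq_ge[OF \<epsilon>, unfolded width mean sum, OF this]
  show "prob {\<omega>\<in>space P. renS X m \<omega> \<le> real m / n - \<epsilon>} \<le> exp (- 2 * \<epsilon>\<^sup>2 / (real m * (lam / n)\<^sup>2))"
    and "prob {\<omega>\<in>space P. renS X m \<omega> \<ge> real m / n + \<epsilon>} \<le> exp (- 2 * \<epsilon>\<^sup>2 / (real m * (lam / n)\<^sup>2))"
    by auto
qed

lemma AE_renS_exceeds_1: "AE \<omega> in P. \<exists>m. 1 < renS X m \<omega>"
proof (rule AE_I[where N = "{\<omega>\<in>space P. \<forall>m. renS X m \<omega> \<le> 1}"])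
  let ?A = "{\<omega>\<in>space P. \<forall>m. renS X m \<omega> \<le> 1}"
  have "prob ?A \<le> 0"
  proof (rule le_0_if_eventually_le_exp[where c = "2 * lam\<^sup>2" and N = "max 1 (nat \<lceil>2 * n\<rceil>)"])
    show "0 < 2 * lam\<^sup>2" using lam_gt_1 by simp
    fix m :: nat assume "max 1 (nat \<lceil>2 * n\<rceil>) \<le> m"
    hence m1: "m \<ge> 1" and m2: "real m \<ge> 2 * n" by (auto simp: nat_le_iff ceiling_le_iff)
    have "prob ?A \<le> prob {\<omega>\<in>space P. renS X m \<omega> \<le> real m / n - (real m / n - 1)}"
      by (intro finite_measure_mono) auto
    also have "\<dots> \<le> exp (- 2 * (real m / n - 1)\<^sup>2 / (real m * (lam / n)\<^sup>2))"
      using m2 n_pos by (intro hoeffding_renS(1) m1) (simp add: field_simps)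
    also have "\<dots> \<le> exp (- real m / (2 * lam\<^sup>2))"
    proof -
      have "real m / n - 1 \<ge> real m / (2 * n)" using m2 n_pos by (simp add: field_simps)
      hence "(real m / (2 * n))\<^sup>2 \<le> (real m / n - 1)\<^sup>2" using n_pos by (intro power_mono) auto
      hence "2 * (real m / (2 * n))\<^sup>2 / (real m * (lam / n)\<^sup>2) \<le> 2 * (real m / n - 1)\<^sup>2 / (real m * (lam / n)\<^sup>2)"
        using m1 lam_gt_1 n_pos by (intro divide_right_mono) auto
      moreover have "2 * (real m / (2 * n))\<^sup>2 / (real m * (lam / n)\<^sup>2) = real m / (2 * lam\<^sup>2)"
        using m1 lam_gt_1 n_pos by (simp add: field_simps power2_eq_square)
      ultimately show ?thesis by simp
    qed
    finally show "prob ?A \<le> exp (- real m / (2 * lam\<^sup>2))" .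
  qed
  thus "emeasure P ?A = 0" by (simp add: emeasure_eq_measure measure_nonneg antisym)
qed (auto simp: not_less)

definition typical :: "'a \<Rightarrow> bool" where
  "typical \<omega> \<longleftrightarrow> (\<forall>m. 0 < X m \<omega> \<and> X m \<omega> \<le> lam / n) \<and> (\<exists>m. 1 < renS X m \<omega>)"

lemma AE_typical: "AE \<omega> in P. typical \<omega>"
  using AE_X_bounds AE_renS_exceeds_1 by (auto simp: typical_def AE_all_countable)

lemma typical_nonneg: "typical \<omega> \<Longrightarrow> \<forall>m. 0 \<le> X m \<omega>"
  unfolding typical_def by (auto intro: less_imp_le)

lemma typical_crossing: "typical \<omega> \<Longrightarrow> \<exists>m. 1 < renS X m \<omega>"
  unfolding typical_def by auto

lemma typical_renS_le: "typical \<omega> \<Longrightarrow> renS X i \<omega> \<le> real i * (lam / n)"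
  by (rule renS_le_linear) (auto simp: typical_def)

lemma typical_renS_le_1_iff: "typical \<omega> \<Longrightarrow> renS X m \<omega> \<le> 1 \<longleftrightarrow> m \<le> renM X \<omega>"
  by (rule renS_le_1_iff[OF typical_nonneg typical_crossing])

text \<open>The spacings are at most lam/n, so at least n/lam - 1 of them fit into [0,1].\<close>

lemma typical_renM_lower: "typical \<omega> \<Longrightarrow> n < (real (renM X \<omega>) + 1) * lam"
proof -
  assume t: "typical \<omega>"
  have "1 < real (Suc (renM X \<omega>)) * (lam / n)"
    using renM_crossing(2)[OF typical_crossing[OF t]] typical_renS_le[OF t, of "Suc (renM X \<omega>)"] by linarith
  thus ?thesis using n_pos by (simp add: field_simps)
qed

end

section \<open>The noise term\<close>

lemma inverse_count_le:
  fixes m :: nat and n lam :: real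
  assumes "m \<ge> 1" "0 < n" "0 < lam" "n \<le> (real m + 1) * lam"
  shows "1 / real m \<le> 2 * lam / n"
proof -
  have "(real m + 1) * lam \<le> 2 * real m * lam" using assms by (simp add: algebra_simps)
  hence "n \<le> 2 * real m * lam" using assms(4) by linarith
  thus ?thesis using assms by (simp add: field_simps)
qed

context renewal_sampling
begin

lemma expectation_Z_mult:
  shows "integrable P (\<lambda>\<omega>. Z i \<omega> * Z j \<omega>)"
    and "expectation (\<lambda>\<omega>. Z i \<omega> * Z j \<omega>) = (if i = j then \<sigma>2 else 0)"
proof -
  have "integrable P (\<lambda>\<omega>. Z i \<omega> * Z j \<omega>) \<and> expectation (\<lambda>\<omega>. Z i \<omega> * Z j \<omega>) = (if i = j then \<sigma>2 else 0)"
  proof (cases "i = j")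
    case True thus ?thesis using integrable_Z_sq[of i] expectation_Z_sq[of i] by (simp add: power2_eq_square)
  next
    case False
    have ind: "indep_var borel (Y (Inr i)) borel (Y (Inr j))" using False by (intro indep_var_Y) auto
    show ?thesis
      using False indep_var_integrable[OF ind] indep_var_lebesgue_integral[OF ind] integrable_Z expectation_Z
      by simp
  qed
  thus "integrable P (\<lambda>\<omega>. Z i \<omega> * Z j \<omega>)" "expectation (\<lambda>\<omega>. Z i \<omega> * Z j \<omega>) = (if i = j then \<sigma>2 else 0)"
    by auto
qed

definition noise_avg :: "int \<Rightarrow> nat \<Rightarrow> 'a \<Rightarrow> complex" where
  "noise_avg k m \<omega> = (1 / of_nat m) * (\<Sum>i=1..m. complex_of_real (Z i \<omega>) * exp (- (\<i> * of_real (2 * pi * of_int k * of_nat i / of_nat m))))"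

lemma measurable_noise_avg [measurable]: "noise_avg k m \<in> borel_measurable P"
  unfolding noise_avg_def by measurable

lemma measurable_noise_avg_renM [measurable]: "(\<lambda>\<omega>. noise_avg k (renM X \<omega>) \<omega>) \<in> borel_measurable P"
  by (rule measurable_compose_countable'[where I = UNIV]) auto

lemma expectation_noise_avg_sq:
  assumes m: "m \<ge> 1"
  shows "integrable P (\<lambda>\<omega>. (cmod (noise_avg k m \<omega>))\<^sup>2)"
    and "expectation (\<lambda>\<omega>. (cmod (noise_avg k m \<omega>))\<^sup>2) = \<sigma>2 / m"
proof -
  define w where "w i = exp (- (\<i> * of_real (2 * pi * of_int k * of_nat i / of_nat m)))" for i :: nat
  have w_cnj: "Re (w i * cnj (w i)) = 1" for i
    using complex_norm_square[of "w i"] by (simp add: w_def)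
  have eq: "(cmod (noise_avg k m \<omega>))\<^sup>2
      = (1 / real m)\<^sup>2 * (\<Sum>i\<in>{1..m}. \<Sum>j\<in>{1..m}. Re (w i * cnj (w j)) * (Z i \<omega> * Z j \<omega>))" for \<omega>
  proof -
    have "(cmod (noise_avg k m \<omega>))\<^sup>2 = (1 / real m)\<^sup>2 * (cmod (\<Sum>i\<in>{1..m}. of_real (Z i \<omega>) * w i))\<^sup>2"
      unfolding noise_avg_def w_def by (simp add: norm_mult power_mult_distrib norm_divide power_divide)
    thus ?thesis unfolding cmod_sum_real_mult_sq by (simp add: algebra_simps)
  qed
  show "integrable P (\<lambda>\<omega>. (cmod (noise_avg k m \<omega>))\<^sup>2)"
    unfolding eq by (intro Bochner_Integration.integrable_mult_right Bochner_Integration.integrable_sum expectation_Z_mult(1))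
  have "expectation (\<lambda>\<omega>. (cmod (noise_avg k m \<omega>))\<^sup>2)
     = (1 / real m)\<^sup>2 * (\<Sum>i\<in>{1..m}. \<Sum>j\<in>{1..m}. Re (w i * cnj (w j)) * expectation (\<lambda>\<omega>. Z i \<omega> * Z j \<omega>))"
    unfolding eq by (simp add: integral_sum integrable_sum expectation_Z_mult(1))
  also have "\<dots> = (1 / real m)\<^sup>2 * (\<Sum>i\<in>{1..m}. \<sigma>2)"
  proof -
    have "Re (w i) * Re (w i) + Im (w i) * Im (w i) = 1" for i using w_cnj[of i] by simp
    thus ?thesis by (simp add: expectation_Z_mult(2) if_distrib cong: if_cong)
  qed
  also have "\<dots> = \<sigma>2 / m" using m by (simp add: power2_eq_square field_simps)
  finally show "expectation (\<lambda>\<omega>. (cmod (noise_avg k m \<omega>))\<^sup>2) = \<sigma>2 / m" .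
qed

text \<open>The event M = m, written so that it is determined by X 0, ..., X m alone and the events are
  pairwise disjoint without any positivity assumption.\<close>

definition count_event :: "nat \<Rightarrow> 'a set" where
  "count_event m = {\<omega>\<in>space P. 1 < renS X (Suc m) \<omega> \<and> (\<forall>j<m. renS X (Suc j) \<omega> \<le> 1)}"

lemma sets_count_event [measurable]: "count_event m \<in> sets P"
  unfolding count_event_def by measurable

lemma disjoint_family_count_event: "disjoint_family count_event"
  unfolding disjoint_family_on_def count_event_def
  by (auto simp: not_less) (metis linorder_neqE_nat not_less)

lemma typical_count_event_iff:
  "typical \<omega> \<Longrightarrow> \<omega> \<in> space P \<Longrightarrow> \<omega> \<in> count_event m \<longleftrightarrow> renM X \<omega> = m"
  unfolding count_event_def using renM_eq_iff[OF typical_nonneg typical_crossing] by auto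

lemma prob_count_event_eq_0:
  assumes "(real m + 1) * lam < n"
  shows "prob (count_event m) = 0"
proof -
  have "AE \<omega> in P. \<omega> \<notin> count_event m"
    using AE_typical
  proof (rule AE_mp, intro AE_I2 impI)
    fix \<omega> assume "typical \<omega>"
    hence "renS X (Suc m) \<omega> \<le> (real m + 1) * (lam / n)" using typical_renS_le[of \<omega> "Suc m"] by (simp add: algebra_simps)
    also have "\<dots> < 1" using assms n_pos by (simp add: field_simps)
    finally show "\<omega> \<notin> count_event m" by (auto simp: count_event_def)
  qed
  hence "emeasure P {\<omega>\<in>space P. \<omega> \<in> count_event m} = 0" by (rule emeasure_eq_0_AE)
  moreover have "{\<omega>\<in>space P. \<omega> \<in> count_event m} = count_event m"
    using sets.sets_into_space[OF sets_count_event[of m]] by auto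
  ultimately show ?thesis by (simp add: emeasure_eq_measure)
qed

text \<open>The event M = m depends only on the spacings and the noise average only on the noise, so
  independence factors the expectation.\<close>

lemma expectation_count_event_noise_avg_sq:
  assumes m: "m \<ge> 1"
  shows "integrable P (\<lambda>\<omega>. indicator (count_event m) \<omega> * (cmod (noise_avg k m \<omega>))\<^sup>2)"
    and "expectation (\<lambda>\<omega>. indicator (count_event m) \<omega> * (cmod (noise_avg k m \<omega>))\<^sup>2) = prob (count_event m) * (\<sigma>2 / m)"
proof -
  let ?A = "Inl ` {..m} :: (nat + nat) set"
  let ?B = "Inr ` {1..m} :: (nat + nat) set"
  let ?YA = "\<lambda>\<omega>. restrict (\<lambda>i. Y i \<omega>) ?A" and ?YB = "\<lambda>\<omega>. restrict (\<lambda>i. Y i \<omega>) ?B"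
  define F :: "(nat + nat \<Rightarrow> real) \<Rightarrow> real" where
    "F f = (if 1 < (\<Sum>l\<in>{..<Suc m}. f (Inl l)) \<and> (\<forall>j\<in>{..<m}. (\<Sum>l\<in>{..<Suc j}. f (Inl l)) \<le> 1) then 1 else 0)" for f
  define G :: "(nat + nat \<Rightarrow> real) \<Rightarrow> real" where
    "G f = (cmod ((1 / of_nat m) * (\<Sum>i\<in>{1..m}. complex_of_real (f (Inr i)) * exp (- (\<i> * of_real (2 * pi * of_int k * of_nat i / of_nat m))))))\<^sup>2" for f
  have "indep_var (PiM ?A (\<lambda>_. borel)) ?YA (PiM ?B (\<lambda>_. borel)) ?YB"
    by (intro indep_var_restrict[OF indep]) auto
  moreover have "F \<in> borel_measurable (PiM ?A (\<lambda>_. borel))" "G \<in> borel_measurable (PiM ?B (\<lambda>_. borel))"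
    unfolding F_def G_def by measurable
  ultimately have ind: "indep_var borel (F \<circ> ?YA) borel (G \<circ> ?YB)"
    by (rule indep_var_compose)
  have F_eq: "(F \<circ> ?YA) \<omega> = indicator (count_event m) \<omega>" if "\<omega> \<in> space P" for \<omega>
  proof -
    have "(\<Sum>l\<in>{..<Suc j}. ?YA \<omega> (Inl l)) = renS X (Suc j) \<omega>" if "j \<le> m" for j
      unfolding renS_def using that by (intro sum.cong refl) auto
    thus ?thesis using that by (auto simp: F_def count_event_def indicator_def)
  qed
  have G_eq: "(G \<circ> ?YB) = (\<lambda>\<omega>. (cmod (noise_avg k m \<omega>))\<^sup>2)"
    by (auto simp: G_def noise_avg_def intro!: sum.cong)
  have iF: "integrable P (F \<circ> ?YA)"
    by (subst Bochner_Integration.integrable_cong[OF refl F_eq])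
       (auto intro!: integrable_real_indicator simp: emeasure_eq_measure)
  have iG: "integrable P (G \<circ> ?YB)"
    unfolding G_eq by (rule expectation_noise_avg_sq(1)[OF m])
  have prod_eq: "(F \<circ> ?YA) \<omega> * (G \<circ> ?YB) \<omega> = indicator (count_event m) \<omega> * (cmod (noise_avg k m \<omega>))\<^sup>2"
    if "\<omega> \<in> space P" for \<omega>
    using F_eq[OF that] G_eq by simp
  show "integrable P (\<lambda>\<omega>. indicator (count_event m) \<omega> * (cmod (noise_avg k m \<omega>))\<^sup>2)"
    using indep_var_integrable[OF ind iF iG] by (subst (asm) Bochner_Integration.integrable_cong[OF refl prod_eq]) auto
  have "expectation (\<lambda>\<omega>. indicator (count_event m) \<omega> * (cmod (noise_avg k m \<omega>))\<^sup>2)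
     = expectation (\<lambda>\<omega>. (F \<circ> ?YA) \<omega> * (G \<circ> ?YB) \<omega>)"
    by (intro Bochner_Integration.integral_cong refl prod_eq[symmetric])
  also have "\<dots> = expectation (F \<circ> ?YA) * expectation (G \<circ> ?YB)"
    by (rule indep_var_lebesgue_integral[OF ind iF iG])
  also have "expectation (F \<circ> ?YA) = prob (count_event m)"
    by (subst Bochner_Integration.integral_cong[OF refl F_eq]) simp_all
  also have "expectation (G \<circ> ?YB) = \<sigma>2 / m"
    unfolding G_eq by (rule expectation_noise_avg_sq(2)[OF m])
  finally show "expectation (\<lambda>\<omega>. indicator (count_event m) \<omega> * (cmod (noise_avg k m \<omega>))\<^sup>2) = prob (count_event m) * (\<sigma>2 / m)" .
qed

lemma nn_integral_count_event_noise_avg_sq: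
  "(\<integral>\<^sup>+\<omega>. ennreal (indicator (count_event m) \<omega> * (cmod (noise_avg k m \<omega>))\<^sup>2) \<partial>P)
     \<le> ennreal (2 * lam * \<sigma>2 / n) * emeasure P (count_event m)"
proof -
  have "(\<integral>\<^sup>+\<omega>. ennreal (indicator (count_event m) \<omega> * (cmod (noise_avg k m \<omega>))\<^sup>2) \<partial>P)
      \<le> ennreal (prob (count_event m) * (2 * lam * \<sigma>2 / n))"
  proof (cases "m = 0")
    case False
    hence m: "m \<ge> 1" by simp
    have "(\<integral>\<^sup>+\<omega>. ennreal (indicator (count_event m) \<omega> * (cmod (noise_avg k m \<omega>))\<^sup>2) \<partial>P)
        = ennreal (prob (count_event m) * (\<sigma>2 / m))"
      using expectation_count_event_noise_avg_sq[OF m, of k] by (subst nn_integral_eq_integral) auto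
    also have "\<dots> \<le> ennreal (prob (count_event m) * (2 * lam * \<sigma>2 / n))"
    proof (cases "n \<le> (real m + 1) * lam")
      case True
      hence "\<sigma>2 * (1 / m) \<le> \<sigma>2 * (2 * lam / n)"
        using inverse_count_le[OF m n_pos] lam_gt_1 sigma2_nonneg by (intro mult_left_mono) auto
      hence "\<sigma>2 / m \<le> 2 * lam * \<sigma>2 / n" by (simp add: ac_simps)
      thus ?thesis by (intro ennreal_leI mult_left_mono) auto
    qed (simp add: prob_count_event_eq_0)
    finally show ?thesis .
  qed (simp add: noise_avg_def)
  also have "\<dots> = ennreal (2 * lam * \<sigma>2 / n) * emeasure P (count_event m)"
    using lam_gt_1 n_pos sigma2_nonneg
    by (simp add: emeasure_eq_measure ennreal_mult'[symmetric] mult.commute)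
  finally show ?thesis .
qed

lemma nn_integral_noise_avg_renM_sq:
  "(\<integral>\<^sup>+\<omega>. ennreal ((cmod (noise_avg k (renM X \<omega>) \<omega>))\<^sup>2) \<partial>P) \<le> ennreal (2 * lam * \<sigma>2 / n)"
proof -
  let ?f = "\<lambda>m \<omega>. ennreal (indicator (count_event m) \<omega> * (cmod (noise_avg k m \<omega>))\<^sup>2)"
  have "(\<integral>\<^sup>+\<omega>. ennreal ((cmod (noise_avg k (renM X \<omega>) \<omega>))\<^sup>2) \<partial>P) = (\<integral>\<^sup>+\<omega>. (\<Sum>m. ?f m \<omega>) \<partial>P)"
  proof (rule nn_integral_cong_AE)
    show "AE \<omega> in P. ennreal ((cmod (noise_avg k (renM X \<omega>) \<omega>))\<^sup>2) = (\<Sum>m. ?f m \<omega>)"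
      using AE_typical
    proof (rule AE_mp, intro AE_I2 impI)
      fix \<omega> assume "\<omega> \<in> space P" "typical \<omega>"
      hence "?f m \<omega> = (if m = renM X \<omega> then ennreal ((cmod (noise_avg k (renM X \<omega>) \<omega>))\<^sup>2) else 0)" for m
        using typical_count_event_iff[of \<omega> m] by (auto simp: indicator_def)
      thus "ennreal ((cmod (noise_avg k (renM X \<omega>) \<omega>))\<^sup>2) = (\<Sum>m. ?f m \<omega>)"
        using sums_single[of "renM X \<omega>" "\<lambda>_. ennreal ((cmod (noise_avg k (renM X \<omega>) \<omega>))\<^sup>2)"]
        by (simp add: sums_iff)
    qed
  qed
  also have "\<dots> = (\<Sum>m. \<integral>\<^sup>+\<omega>. ?f m \<omega> \<partial>P)"
    by (rule nn_integral_suminf) measurable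
  also have "\<dots> \<le> (\<Sum>m. ennreal (2 * lam * \<sigma>2 / n) * emeasure P (count_event m))"
    by (intro suminf_le allI summableI nn_integral_count_event_noise_avg_sq)
  also have "\<dots> = ennreal (2 * lam * \<sigma>2 / n) * emeasure P (\<Union>m. count_event m)"
    using suminf_emeasure[OF _ disjoint_family_count_event, of P] by (simp add: image_subset_iff)
  also have "\<dots> \<le> ennreal (2 * lam * \<sigma>2 / n) * 1"
    by (intro mult_left_mono emeasure_le_1) auto
  finally show ?thesis by simp
qed

lemma expectation_noise_avg_renM_sq:
  shows "integrable P (\<lambda>\<omega>. (cmod (noise_avg k (renM X \<omega>) \<omega>))\<^sup>2)"
    and "expectation (\<lambda>\<omega>. (cmod (noise_avg k (renM X \<omega>) \<omega>))\<^sup>2) \<le> 2 * lam * \<sigma>2 / n"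
proof -
  show int: "integrable P (\<lambda>\<omega>. (cmod (noise_avg k (renM X \<omega>) \<omega>))\<^sup>2)"
    using nn_integral_noise_avg_renM_sq[of k] by (intro integrableI_bounded) (auto simp: le_less_trans)
  have "ennreal (expectation (\<lambda>\<omega>. (cmod (noise_avg k (renM X \<omega>) \<omega>))\<^sup>2)) \<le> ennreal (2 * lam * \<sigma>2 / n)"
    using nn_integral_noise_avg_renM_sq[of k] nn_integral_eq_integral[OF int] by simp
  thus "expectation (\<lambda>\<omega>. (cmod (noise_avg k (renM X \<omega>) \<omega>))\<^sup>2) \<le> 2 * lam * \<sigma>2 / n"
    using lam_gt_1 n_pos sigma2_nonneg by (simp add: ennreal_le_iff)
qed

end

section \<open>Drift of the partial sums and deviation of the sample count\<close>

lemma nn_integral_square_le_layers: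
  fixes T :: "'a \<Rightarrow> real"
  assumes [measurable]: "T \<in> borel_measurable M" and nonneg: "\<And>\<omega>. \<omega> \<in> space M \<Longrightarrow> 0 \<le> T \<omega>"
  shows "(\<integral>\<^sup>+\<omega>. ennreal ((T \<omega>)\<^sup>2) \<partial>M) \<le> (\<Sum>j. ennreal (2 * real j + 1) * emeasure M {\<omega>\<in>space M. real j \<le> T \<omega>})"
proof -
  have "(\<integral>\<^sup>+\<omega>. ennreal ((T \<omega>)\<^sup>2) \<partial>M)
      \<le> (\<integral>\<^sup>+\<omega>. (\<Sum>j. ennreal (2 * real j + 1) * indicator {\<omega>\<in>space M. real j \<le> T \<omega>} \<omega>) \<partial>M)"
  proof (intro nn_integral_mono)
    fix \<omega> assume \<omega>: "\<omega> \<in> space M"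
    have "(\<lambda>j. if real j \<le> T \<omega> then ennreal (2 * real j + 1) else 0)
        = (\<lambda>j. ennreal (2 * real j + 1) * indicator {\<omega>\<in>space M. real j \<le> T \<omega>} \<omega>)"
      using \<omega> by (simp add: fun_eq_iff indicator_def del: ennreal_plus)
    thus "ennreal ((T \<omega>)\<^sup>2) \<le> (\<Sum>j. ennreal (2 * real j + 1) * indicator {\<omega>\<in>space M. real j \<le> T \<omega>} \<omega>)"
      using square_le_sum_odd_numbers[OF nonneg[OF \<omega>]] by (simp del: ennreal_plus)
  qed
  also have "\<dots> = (\<Sum>j. ennreal (2 * real j + 1) * emeasure M {\<omega>\<in>space M. real j \<le> T \<omega>})"
    by (simp add: nn_integral_suminf nn_integral_cmult_indicator)
  finally show ?thesis .
qed

context renewal_sampling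
begin

definition drift :: "nat \<Rightarrow> 'a \<Rightarrow> real" where
  "drift i \<omega> = renS X i \<omega> - real i / n"

definition count_deviation :: "'a \<Rightarrow> real" where
  "count_deviation \<omega> = \<bar>real (renM X \<omega>) / n - 1\<bar>"

lemma measurable_drift [measurable]: "drift i \<in> borel_measurable P"
  unfolding drift_def by measurable

lemma measurable_count_deviation [measurable]: "count_deviation \<in> borel_measurable P"
  unfolding count_deviation_def by measurable

lemma expectation_centred_X_mult:
  shows "integrable P (\<lambda>\<omega>. (X m \<omega> - 1/n) * (X l \<omega> - 1/n))"
    and "expectation (\<lambda>\<omega>. (X m \<omega> - 1/n) * (X l \<omega> - 1/n)) \<le> (if m = l then (lam / n)\<^sup>2 else 0)"
proof -
  have integrable_centred: "integrable P (\<lambda>\<omega>. X m \<omega> - 1/n)" for m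
    using integrable_X by simp
  have "integrable P (\<lambda>\<omega>. (X m \<omega> - 1/n) * (X l \<omega> - 1/n)) \<and>
        expectation (\<lambda>\<omega>. (X m \<omega> - 1/n) * (X l \<omega> - 1/n)) \<le> (if m = l then (lam / n)\<^sup>2 else 0)"
  proof (cases "m = l")
    case True
    have bound: "AE \<omega> in P. norm ((X m \<omega> - 1/n) * (X m \<omega> - 1/n)) \<le> (lam / n)\<^sup>2"
    proof (rule eventually_mono[OF AE_X_bounds[of m]])
      fix \<omega> assume "0 < X m \<omega> \<and> X m \<omega> \<le> lam / n"
      moreover have "1 / n \<le> lam / n" "0 \<le> 1 / n" using lam_gt_1 n_pos by (simp_all add: divide_right_mono)
      ultimately have "\<bar>X m \<omega> - 1/n\<bar> \<le> lam / n" unfolding abs_le_iff by linarith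
      hence "\<bar>X m \<omega> - 1/n\<bar>\<^sup>2 \<le> (lam / n)\<^sup>2" by (intro power_mono) auto
      thus "norm ((X m \<omega> - 1/n) * (X m \<omega> - 1/n)) \<le> (lam / n)\<^sup>2" by (simp add: power2_eq_square abs_mult)
    qed
    have i: "integrable P (\<lambda>\<omega>. (X m \<omega> - 1/n) * (X m \<omega> - 1/n))"
      by (rule integrable_const_bound[OF bound]) simp
    have "expectation (\<lambda>\<omega>. (X m \<omega> - 1/n) * (X m \<omega> - 1/n)) \<le> expectation (\<lambda>\<omega>. (lam / n)\<^sup>2)"
      by (intro integral_mono_AE i) (use bound in \<open>auto elim!: eventually_mono\<close>)
    thus ?thesis using True i by (simp add: prob_space)
  next
    case False
    have "indep_var borel (Y (Inl m)) borel (Y (Inl l))" using False by (intro indep_var_Y) auto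
    hence ind: "indep_var borel ((\<lambda>x. x - 1/n) \<circ> X m) borel ((\<lambda>x. x - 1/n) \<circ> X l)"
      using indep_var_compose[of borel "Y (Inl m)" borel "Y (Inl l)" "\<lambda>x. x - 1/n" borel "\<lambda>x. x - 1/n" borel]
      by simp
    have "expectation (\<lambda>\<omega>. X m \<omega> - 1/n) = 0" for m
      using integrable_X[of m] expectation_X[of m] by (simp add: Bochner_Integration.integral_diff prob_space)
    thus ?thesis
      using False indep_var_integrable[OF ind] indep_var_lebesgue_integral[OF ind] integrable_centred
      by (simp add: comp_def)
  qed
  thus "integrable P (\<lambda>\<omega>. (X m \<omega> - 1/n) * (X l \<omega> - 1/n))"
    "expectation (\<lambda>\<omega>. (X m \<omega> - 1/n) * (X l \<omega> - 1/n)) \<le> (if m = l then (lam / n)\<^sup>2 else 0)" by auto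
qed

lemma expectation_drift_sq:
  shows "integrable P (\<lambda>\<omega>. (drift i \<omega>)\<^sup>2)" and "expectation (\<lambda>\<omega>. (drift i \<omega>)\<^sup>2) \<le> real i * (lam / n)\<^sup>2"
proof -
  have eq: "(drift i \<omega>)\<^sup>2 = (\<Sum>m<i. \<Sum>l<i. (X m \<omega> - 1/n) * (X l \<omega> - 1/n))" for \<omega>
  proof -
    have "drift i \<omega> = (\<Sum>m<i. X m \<omega> - 1/n)" by (simp add: drift_def renS_def sum_subtractf)
    thus ?thesis by (simp add: power2_eq_square sum_product)
  qed
  show "integrable P (\<lambda>\<omega>. (drift i \<omega>)\<^sup>2)" unfolding eq
    by (intro Bochner_Integration.integrable_sum expectation_centred_X_mult(1))
  have "expectation (\<lambda>\<omega>. (drift i \<omega>)\<^sup>2) = (\<Sum>m<i. \<Sum>l<i. expectation (\<lambda>\<omega>. (X m \<omega> - 1/n) * (X l \<omega> - 1/n)))"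
    unfolding eq by (simp add: Bochner_Integration.integral_sum Bochner_Integration.integrable_sum expectation_centred_X_mult(1))
  also have "\<dots> \<le> (\<Sum>m<i. \<Sum>l<i. (if m = l then (lam / n)\<^sup>2 else 0))"
    by (intro sum_mono expectation_centred_X_mult(2))
  also have "\<dots> = real i * (lam / n)\<^sup>2" by simp
  finally show "expectation (\<lambda>\<omega>. (drift i \<omega>)\<^sup>2) \<le> real i * (lam / n)\<^sup>2" .
qed

lemma sum_expectation_drift_sq_le:
  assumes n4: "n \<ge> 4"
  shows "(\<Sum>i\<in>{1..nat \<lceil>2 * n\<rceil>}. expectation (\<lambda>\<omega>. (drift i \<omega>)\<^sup>2)) \<le> 9 * lam\<^sup>2"
proof -
  let ?K = "nat \<lceil>2 * n\<rceil>"
  have K: "real ?K \<le> 3 * n" using n4 ceiling_correct[of "2 * n"] by (simp add: of_nat_nat)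
  have "(\<Sum>i\<in>{1..?K}. expectation (\<lambda>\<omega>. (drift i \<omega>)\<^sup>2)) \<le> (\<Sum>i\<in>{1..?K}. real ?K * (lam / n)\<^sup>2)"
  proof (intro sum_mono)
    fix i assume "i \<in> {1..?K}"
    hence "real i * (lam / n)\<^sup>2 \<le> real ?K * (lam / n)\<^sup>2" by (intro mult_right_mono) auto
    thus "expectation (\<lambda>\<omega>. (drift i \<omega>)\<^sup>2) \<le> real ?K * (lam / n)\<^sup>2"
      using expectation_drift_sq(2)[of i] by linarith
  qed
  also have "\<dots> = (real ?K)\<^sup>2 * (lam / n)\<^sup>2" by (simp add: power2_eq_square)
  also have "\<dots> \<le> (3 * n)\<^sup>2 * (lam / n)\<^sup>2" using K by (intro mult_right_mono power_mono) auto
  also have "\<dots> = 9 * lam\<^sup>2" using n_pos by (simp add: power2_eq_square field_simps)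
  finally show ?thesis .
qed

text \<open>If M deviates from n by a factor s, then either the first n(1+s) spacings or the first
  n(1-s) + 1 spacings deviate from their mean in total by about ns.\<close>

lemma typical_count_deviation_ge:
  assumes t: "typical \<omega>" and s: "s \<le> count_deviation \<omega>"
  shows "renS X (nat \<lceil>n * (1 + s)\<rceil>) \<omega> \<le> 1 \<or> 1 < renS X (Suc (nat \<lfloor>n * (1 - s)\<rfloor>)) \<omega>"
proof -
  have "real (renM X \<omega>) / n \<ge> 1 + s \<or> real (renM X \<omega>) / n \<le> 1 - s"
    using s unfolding count_deviation_def by linarith
  thus ?thesis
  proof
    assume "real (renM X \<omega>) / n \<ge> 1 + s"
    hence "nat \<lceil>n * (1 + s)\<rceil> \<le> renM X \<omega>"
      using n_pos by (simp add: field_simps nat_le_iff ceiling_le_iff)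
    thus ?thesis using typical_renS_le_1_iff[OF t] by blast
  next
    assume "real (renM X \<omega>) / n \<le> 1 - s"
    hence "renM X \<omega> \<le> nat \<lfloor>n * (1 - s)\<rfloor>"
      using n_pos by (simp add: field_simps) linarith
    thus ?thesis using typical_renS_le_1_iff[OF t] by (simp add: not_le[symmetric])
  qed
qed

lemma prob_renS_ceiling_le_1:
  assumes n4: "n \<ge> 4" and s: "0 < s" "s \<le> 1"
  shows "prob {\<omega>\<in>space P. renS X (nat \<lceil>n * (1 + s)\<rceil>) \<omega> \<le> 1} \<le> exp (- s\<^sup>2 * n / (4 * lam\<^sup>2))"
proof -
  define m where "m = nat \<lceil>n * (1 + s)\<rceil>"
  have m_ge: "real m \<ge> n * (1 + s)" unfolding m_def by (rule real_nat_ceiling_ge)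
  have "real m \<le> n * (1 + s) + 1"
    unfolding m_def using n_pos s ceiling_correct[of "n * (1 + s)"] by (simp add: of_nat_nat)
  moreover have "n * (1 + s) \<le> n * 2" using s n_pos by (intro mult_left_mono) auto
  ultimately have m_le: "real m \<le> 3 * n" using n4 by linarith
  have "0 < n * (1 + s)" using n_pos s by simp
  hence m_pos: "m \<ge> 1" using m_ge by (cases m) auto
  have e: "real m / n - 1 \<ge> s" using m_ge n_pos by (simp add: field_simps)
  have "prob {\<omega>\<in>space P. renS X m \<omega> \<le> 1} = prob {\<omega>\<in>space P. renS X m \<omega> \<le> real m / n - (real m / n - 1)}"
    by simp
  also have "\<dots> \<le> exp (- 2 * (real m / n - 1)\<^sup>2 / (real m * (lam / n)\<^sup>2))"
    using e s by (intro hoeffding_renS(1) m_pos) simp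
  also have "\<dots> \<le> exp (- 2 * s\<^sup>2 * n / (3 * lam\<^sup>2))"
    using e m_le m_pos n_pos lam_gt_1 s by (intro exp_mono hoeffding_exponent_le) auto
  also have "\<dots> \<le> exp (- s\<^sup>2 * n / (4 * lam\<^sup>2))"
    using lam_gt_1 n_pos by (intro exp_mono) (simp add: field_simps)
  finally show ?thesis unfolding m_def .
qed

lemma prob_renS_floor_ge_1:
  assumes n4: "n \<ge> 4" and s: "0 < s" "s \<le> 1" "1 / n \<le> s / 2"
  shows "prob {\<omega>\<in>space P. 1 \<le> renS X (Suc (nat \<lfloor>n * (1 - s)\<rfloor>)) \<omega>} \<le> exp (- s\<^sup>2 * n / (4 * lam\<^sup>2))"
proof -
  define m where "m = Suc (nat \<lfloor>n * (1 - s)\<rfloor>)"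
  have m_le': "real m \<le> n * (1 - s) + 1" unfolding m_def using n_pos s by (simp add: of_nat_nat)
  moreover have "n * (1 - s) \<le> n * 1" using s n_pos by (intro mult_left_mono) auto
  ultimately have m_le: "real m \<le> 2 * n" using n4 by linarith
  have m_pos: "m \<ge> 1" by (simp add: m_def)
  have e: "1 - real m / n \<ge> s / 2" using m_le' s n_pos by (simp add: field_simps)
  have "prob {\<omega>\<in>space P. 1 \<le> renS X m \<omega>} = prob {\<omega>\<in>space P. renS X m \<omega> \<ge> real m / n + (1 - real m / n)}"
    by simp
  also have "\<dots> \<le> exp (- 2 * (1 - real m / n)\<^sup>2 / (real m * (lam / n)\<^sup>2))"
    using e s by (intro hoeffding_renS(2) m_pos) linarith
  also have "\<dots> \<le> exp (- 2 * (s / 2)\<^sup>2 * n / (2 * lam\<^sup>2))"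
    using e m_le m_pos n_pos lam_gt_1 s by (intro exp_mono hoeffding_exponent_le) auto
  also have "- 2 * (s / 2)\<^sup>2 * n / (2 * lam\<^sup>2) = - s\<^sup>2 * n / (4 * lam\<^sup>2)"
    by (simp add: power_divide field_simps)
  finally show ?thesis unfolding m_def .
qed

lemma count_deviation_tail:
  assumes n4: "n \<ge> 4" and j1: "j \<ge> 1" and j_le: "real j \<le> sqrt n"
  shows "emeasure P {\<omega>\<in>space P. real j \<le> min 1 (count_deviation \<omega>) * sqrt n} \<le> ennreal (2 * exp (- (real j)\<^sup>2 / (4 * lam\<^sup>2)))"
proof -
  define s where "s = real j / sqrt n"
  have sn: "sqrt n > 0" using n_pos by simp
  have s: "0 < s" "s \<le> 1" using j1 j_le sn by (simp_all add: s_def)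
  have s2n: "s\<^sup>2 * n = (real j)\<^sup>2" using n_pos sn by (simp add: s_def power_divide)
  have s_half: "1 / n \<le> s / 2"
  proof -
    have "sqrt n \<ge> 2" using n4 real_sqrt_le_mono[of 4 n] by simp
    have "s * n = real j * sqrt n" using n_pos sn by (simp add: s_def field_simps power2_eq_square)
    also have "\<dots> \<ge> 1 * 2" using j1 \<open>sqrt n \<ge> 2\<close> by (intro mult_mono) auto
    finally show ?thesis using n_pos by (simp add: field_simps)
  qed
  let ?A1 = "{\<omega>\<in>space P. renS X (nat \<lceil>n * (1 + s)\<rceil>) \<omega> \<le> 1}"
  let ?A2 = "{\<omega>\<in>space P. 1 \<le> renS X (Suc (nat \<lfloor>n * (1 - s)\<rfloor>)) \<omega>}"
  have "emeasure P {\<omega>\<in>space P. real j \<le> min 1 (count_deviation \<omega>) * sqrt n} \<le> emeasure P (?A1 \<union> ?A2)"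
  proof (rule emeasure_mono_AE)
    show "AE \<omega> in P. \<omega> \<in> {\<omega>\<in>space P. real j \<le> min 1 (count_deviation \<omega>) * sqrt n} \<longrightarrow> \<omega> \<in> ?A1 \<union> ?A2"
      using AE_typical
    proof (rule AE_mp, intro AE_I2 impI)
      fix \<omega> assume "\<omega> \<in> space P" "typical \<omega>" "\<omega> \<in> {\<omega>\<in>space P. real j \<le> min 1 (count_deviation \<omega>) * sqrt n}"
      moreover from this have "s \<le> min 1 (count_deviation \<omega>)"
        unfolding s_def using sn by (simp only: pos_divide_le_eq mem_Collect_eq)
      hence "s \<le> count_deviation \<omega>" by simp
      ultimately show "\<omega> \<in> ?A1 \<union> ?A2"
        using typical_count_deviation_ge[of \<omega> s] by auto
    qed
  qed measurable
  also have "\<dots> \<le> emeasure P ?A1 + emeasure P ?A2" by (rule emeasure_subadditive) measurable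
  also have "\<dots> \<le> ennreal (exp (- (real j)\<^sup>2 / (4 * lam\<^sup>2))) + ennreal (exp (- (real j)\<^sup>2 / (4 * lam\<^sup>2)))"
    using prob_renS_ceiling_le_1[OF n4 s] prob_renS_floor_ge_1[OF n4 s s_half]
    unfolding s2n[symmetric] by (intro add_mono) (simp_all add: emeasure_eq_measure mult.assoc)
  finally show ?thesis by (simp add: ennreal_plus[symmetric] del: ennreal_plus)
qed
lemma emeasure_count_deviation_layer:
  assumes n4: "n \<ge> 4"
  shows "emeasure P {\<omega>\<in>space P. real j \<le> min 1 (count_deviation \<omega>) * sqrt n} \<le> ennreal (2 * exp (- (real j)\<^sup>2 / (4 * lam\<^sup>2)))"
proof (cases "j = 0")
  case True
  have "emeasure P {\<omega>\<in>space P. real j \<le> min 1 (count_deviation \<omega>) * sqrt n} \<le> 1" by (rule emeasure_le_1)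
  also have "1 \<le> ennreal (2 * exp (- (real j)\<^sup>2 / (4 * lam\<^sup>2)))" using True by simp
  finally show ?thesis .
next
  case False
  show ?thesis
  proof (cases "real j \<le> sqrt n")
    case True thus ?thesis using count_deviation_tail[OF n4, of j] False by simp
  next
    case False
    have "min 1 (count_deviation \<omega>) * sqrt n \<le> 1 * sqrt n" for \<omega> using n_pos by (intro mult_right_mono) auto
    hence "{\<omega>\<in>space P. real j \<le> min 1 (count_deviation \<omega>) * sqrt n} = {}" using False by (auto intro: order_trans)
    thus ?thesis by (simp only: emeasure_empty) simp
  qed
qed

text \<open>Layer-cake summation of the sub-Gaussian tails of sqrt n * min 1 (count_deviation).\<close>

lemma nn_integral_count_deviation_sq:
  assumes n4: "n \<ge> 4"
  shows "(\<integral>\<^sup>+\<omega>. ennreal ((min 1 (count_deviation \<omega>))\<^sup>2) \<partial>P) \<le> ennreal ((\<Sum>j. gauss_tail_weight lam j) / n)"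
proof -
  let ?T = "\<lambda>\<omega>. min 1 (count_deviation \<omega>) * sqrt n"
  let ?E = "\<lambda>j. {\<omega>\<in>space P. real j \<le> ?T \<omega>}"
  have summable: "summable (gauss_tail_weight lam)"
    using lam_gt_1 by (intro summable_gauss_tail_weight) simp
  have "(\<integral>\<^sup>+\<omega>. ennreal ((min 1 (count_deviation \<omega>))\<^sup>2) \<partial>P) = (\<integral>\<^sup>+\<omega>. ennreal (1 / n) * ennreal ((?T \<omega>)\<^sup>2) \<partial>P)"
    using n_pos by (intro nn_integral_cong) (simp add: power_mult_distrib ennreal_mult'[symmetric])
  also have "\<dots> = ennreal (1 / n) * (\<integral>\<^sup>+\<omega>. ennreal ((?T \<omega>)\<^sup>2) \<partial>P)"
    by (rule nn_integral_cmult) measurable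
  also have "\<dots> \<le> ennreal (1 / n) * (\<Sum>j. ennreal (2 * real j + 1) * emeasure P (?E j))"
    using n_pos by (intro mult_left_mono nn_integral_square_le_layers) (auto simp: count_deviation_def)
  also have "\<dots> \<le> ennreal (1 / n) * (\<Sum>j. ennreal (gauss_tail_weight lam j))"
  proof (intro mult_left_mono suminf_le allI summableI)
    fix j
    have "ennreal (2 * real j + 1) * emeasure P (?E j)
        \<le> ennreal (2 * real j + 1) * ennreal (2 * exp (- (real j)\<^sup>2 / (4 * lam\<^sup>2)))"
      by (intro mult_left_mono emeasure_count_deviation_layer[OF n4]) simp
    thus "ennreal (2 * real j + 1) * emeasure P (?E j) \<le> ennreal (gauss_tail_weight lam j)"
      by (simp add: gauss_tail_weight_def ennreal_mult[symmetric] del: ennreal_mult ennreal_plus)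
  qed simp
  also have "(\<Sum>j. ennreal (gauss_tail_weight lam j)) = ennreal (\<Sum>j. gauss_tail_weight lam j)"
    using summable by (intro suminf_ennreal2) (auto intro: gauss_tail_weight_nonneg)
  also have "ennreal (1 / n) * \<dots> = ennreal ((\<Sum>j. gauss_tail_weight lam j) / n)"
    using n_pos summable by (simp add: ennreal_mult[symmetric] suminf_nonneg gauss_tail_weight_nonneg del: ennreal_mult)
  finally show ?thesis .
qed

lemma expectation_count_deviation_sq:
  assumes n4: "n \<ge> 4"
  shows "integrable P (\<lambda>\<omega>. (min 1 (count_deviation \<omega>))\<^sup>2)"
    and "expectation (\<lambda>\<omega>. (min 1 (count_deviation \<omega>))\<^sup>2) \<le> (\<Sum>j. gauss_tail_weight lam j) / n"
proof -
  have "(min 1 (count_deviation \<omega>))\<^sup>2 \<le> 1" for \<omega>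
    by (simp add: count_deviation_def power_le_one)
  thus int: "integrable P (\<lambda>\<omega>. (min 1 (count_deviation \<omega>))\<^sup>2)"
    by (intro integrable_const_bound[where B = 1]) auto
  have "ennreal (expectation (\<lambda>\<omega>. (min 1 (count_deviation \<omega>))\<^sup>2)) \<le> ennreal ((\<Sum>j. gauss_tail_weight lam j) / n)"
    using nn_integral_count_deviation_sq[OF n4] nn_integral_eq_integral[OF int] by simp
  moreover have "0 \<le> (\<Sum>j. gauss_tail_weight lam j) / n"
    using n_pos lam_gt_1 summable_gauss_tail_weight[of lam]
    by (intro divide_nonneg_nonneg suminf_nonneg gauss_tail_weight_nonneg) auto
  ultimately show "expectation (\<lambda>\<omega>. (min 1 (count_deviation \<omega>))\<^sup>2) \<le> (\<Sum>j. gauss_tail_weight lam j) / n"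
    by (simp add: ennreal_le_iff)
qed

end

section \<open>The bias term\<close>

definition bias_threshold :: "nat \<Rightarrow> real \<Rightarrow> real" where
  "bias_threshold b lam = max 4 (lam * (2 * real b + 2))"

definition bias_const :: "nat \<Rightarrow> real \<Rightarrow> real" where
  "bias_const b lam = 36 * lam ^ 3 * (lipschitz_bound b)\<^sup>2 + (4 + 2 * (lipschitz_bound b)\<^sup>2) * (\<Sum>j. gauss_tail_weight lam j)"

text \<open>Below the threshold the crude bound 4 on the squared bias is used; since n is then less than
  the threshold, 4 is at most 4 * threshold / n.\<close>

definition error_const :: "nat \<Rightarrow> real \<Rightarrow> real \<Rightarrow> real" where
  "error_const b lam \<sigma>2 = 8 * bias_threshold b lam + 4 * lam * \<sigma>2 + 2 * bias_const b lam"

locale bandlimited_renewal_sampling = renewal_sampling +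
  fixes b :: nat and g :: "real \<Rightarrow> real"
  assumes g_bound: "\<And>x. \<bar>g x\<bar> \<le> 1"
    and g_expansion: "\<And>x. complex_of_real (g x) = (\<Sum>k=- int b..int b. fcoef g k * exp (\<i> * of_real (2 * pi * of_int k * x)))"
begin

lemma measurable_g [measurable]: "g \<in> borel_measurable borel"
proof -
  have "g = (\<lambda>x. Re (\<Sum>k=- int b..int b. fcoef g k * exp (\<i> * of_real (2 * pi * of_int k * x))))"
    by (rule ext) (metis g_expansion Re_complex_of_real)
  also have "\<dots> \<in> borel_measurable borel" by measurable
  finally show ?thesis .
qed

definition bias :: "int \<Rightarrow> 'a \<Rightarrow> complex" where
  "bias k \<omega> = (1 / of_nat (renM X \<omega>)) * (\<Sum>i=1..renM X \<omega>. complex_of_real (g (renS X i \<omega>))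
     * exp (- (\<i> * of_real (2 * pi * of_int k * of_nat i / of_nat (renM X \<omega>))))) - fcoef g k"

lemma measurable_bias [measurable]: "bias k \<in> borel_measurable P"
proof -
  have "(\<lambda>\<omega>. (\<lambda>m \<omega>. (1 / of_nat m) * (\<Sum>i=1..m. complex_of_real (g (renS X i \<omega>))
      * exp (- (\<i> * of_real (2 * pi * of_int k * of_nat i / of_nat m)))) - fcoef g k) (renM X \<omega>) \<omega>) \<in> borel_measurable P"
    by (rule measurable_compose_countable'[where I = UNIV]) auto
  thus ?thesis by (simp add: bias_def[abs_def])
qed

lemma measurable_Ahat [measurable]: "Ahat g X Z k \<in> borel_measurable P"
proof -
  have "(\<lambda>\<omega>. (\<lambda>m \<omega>. (1 / of_nat m) * (\<Sum>i=1..m. complex_of_real (g (renS X i \<omega>) + Z i \<omega>)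
      * exp (- (\<i> * of_real (2 * pi * of_int k * of_nat i / of_nat m))))) (renM X \<omega>) \<omega>) \<in> borel_measurable P"
    by (rule measurable_compose_countable'[where I = UNIV]) auto
  thus ?thesis by (simp add: Ahat_def[abs_def] Let_def)
qed

lemma Ahat_minus_fcoef: "Ahat g X Z k \<omega> - fcoef g k = bias k \<omega> + noise_avg k (renM X \<omega>) \<omega>"
  by (simp add: Ahat_def bias_def noise_avg_def Let_def distrib_left distrib_right sum.distrib)

lemma norm_bias_le_2: "cmod (bias k \<omega>) \<le> 2"
proof -
  let ?M = "renM X \<omega>"
  have "cmod ((1 / of_nat ?M) * (\<Sum>i=1..?M. complex_of_real (g (renS X i \<omega>))
      * exp (- (\<i> * of_real (2 * pi * of_int k * of_nat i / of_nat ?M))))) \<le> 1"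
  proof (cases "?M = 0")
    case False
    have "cmod (\<Sum>i=1..?M. complex_of_real (g (renS X i \<omega>))
        * exp (- (\<i> * of_real (2 * pi * of_int k * of_nat i / of_nat ?M)))) \<le> (\<Sum>i=1..?M. 1)"
      using g_bound by (intro order_trans[OF norm_sum sum_mono]) (simp add: norm_mult)
    thus ?thesis using False by (simp add: norm_mult norm_divide field_simps)
  qed simp
  thus ?thesis
    using norm_fcoef_le_1[of g k, OF g_bound] norm_triangle_ineq4 unfolding bias_def by (smt (verit))
qed

lemma typical_norm_bias_le:
  assumes t: "typical \<omega>" and M: "renM X \<omega> > 2 * b" and k: "k \<in> {- int b..int b}"
  shows "cmod (bias k \<omega>) \<le> lipschitz_bound b * ((1 / real (renM X \<omega>)) * (\<Sum>i=1..renM X \<omega>. \<bar>drift i \<omega>\<bar>))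
           + lipschitz_bound b * count_deviation \<omega>"
proof -
  define M where "M = renM X \<omega>"
  have M1: "M \<ge> 1" using M by (simp add: M_def)
  have "\<bar>renS X i \<omega> - real i / real M\<bar> \<le> \<bar>drift i \<omega>\<bar> + count_deviation \<omega>" if "i \<le> M" for i
  proof -
    have "real i / n - real i / real M = (real i / real M) * (real M / n - 1)"
      using M1 n_pos by (simp add: field_simps)
    hence "\<bar>real i / n - real i / real M\<bar> = (real i / real M) * \<bar>real M / n - 1\<bar>"
      by (simp add: abs_mult)
    also have "\<dots> \<le> 1 * \<bar>real M / n - 1\<bar>" using that M1 by (intro mult_right_mono) auto
    finally have "\<bar>real i / n - real i / real M\<bar> \<le> count_deviation \<omega>"
      by (simp add: count_deviation_def M_def)
    thus ?thesis unfolding drift_def by linarith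
  qed
  hence "(1 / real M) * (\<Sum>i=1..M. \<bar>renS X i \<omega> - real i / real M\<bar>)
      \<le> (1 / real M) * (\<Sum>i=1..M. \<bar>drift i \<omega>\<bar> + count_deviation \<omega>)"
    by (intro mult_left_mono sum_mono) auto
  also have "\<dots> = (1 / real M) * (\<Sum>i=1..M. \<bar>drift i \<omega>\<bar>) + count_deviation \<omega>"
    using M1 by (simp add: sum.distrib field_simps)
  finally have "lipschitz_bound b * ((1 / real M) * (\<Sum>i=1..M. \<bar>renS X i \<omega> - real i / real M\<bar>))
      \<le> lipschitz_bound b * ((1 / real M) * (\<Sum>i=1..M. \<bar>drift i \<omega>\<bar>) + count_deviation \<omega>)"
    by (intro mult_left_mono lipschitz_bound_nonneg)
  moreover have "cmod (bias k \<omega>) \<le> lipschitz_bound b * ((1 / real M) * (\<Sum>i=1..M. \<bar>renS X i \<omega> - real i / real M\<bar>))"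
    unfolding bias_def M_def by (rule norm_dft_perturbed_samples_le[OF g_bound g_expansion M k])
  ultimately show ?thesis by (simp add: M_def distrib_left)
qed

text \<open>When M > 2n only the truncation min 1 is needed: it makes the right-hand side at least 4.\<close>

lemma typical_bias_sq_le:
  assumes t: "typical \<omega>" and n_ge: "n \<ge> bias_threshold b lam" and k: "k \<in> {- int b..int b}"
  shows "(cmod (bias k \<omega>))\<^sup>2 \<le> (4 * lam * (lipschitz_bound b)\<^sup>2 / n) * (\<Sum>i\<in>{1..nat \<lceil>2 * n\<rceil>}. (drift i \<omega>)\<^sup>2)
           + (4 + 2 * (lipschitz_bound b)\<^sup>2) * (min 1 (count_deviation \<omega>))\<^sup>2"
proof -
  define M where "M = renM X \<omega>"
  define L where "L = lipschitz_bound b"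
  define K where "K = nat \<lceil>2 * n\<rceil>"
  define u where "u = (1 / real M) * (\<Sum>i=1..M. \<bar>drift i \<omega>\<bar>)"
  have M_lower: "n < (real M + 1) * lam" using typical_renM_lower[OF t] by (simp add: M_def)
  have "lam * (2 * real b + 2) < lam * (real M + 1)"
    using M_lower n_ge by (simp add: bias_threshold_def mult.commute)
  hence M2b: "2 * b < M" using lam_gt_1 by simp
  hence M1: "M \<ge> 1" by simp
  have bias_4: "(cmod (bias k \<omega>))\<^sup>2 \<le> 4"
    using power_mono[OF norm_bias_le_2[of k \<omega>] norm_ge_zero, of 2] by simp
  have drift_nonneg: "0 \<le> (4 * lam * L\<^sup>2 / n) * (\<Sum>i\<in>{1..K}. (drift i \<omega>)\<^sup>2)"
    using lam_gt_1 n_pos by (intro mult_nonneg_nonneg divide_nonneg_nonneg sum_nonneg) auto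
  have "(cmod (bias k \<omega>))\<^sup>2 \<le> (4 * lam * L\<^sup>2 / n) * (\<Sum>i\<in>{1..K}. (drift i \<omega>)\<^sup>2) + 2 * L\<^sup>2 * (count_deviation \<omega>)\<^sup>2"
    if "M \<le> K"
  proof -
    have "(cmod (bias k \<omega>))\<^sup>2 \<le> (L * u + L * count_deviation \<omega>)\<^sup>2"
      using typical_norm_bias_le[OF t _ k] M2b by (intro power_mono) (simp_all add: M_def L_def u_def)
    also have "\<dots> \<le> 2 * L\<^sup>2 * u\<^sup>2 + 2 * L\<^sup>2 * (count_deviation \<omega>)\<^sup>2"
      using square_add_le[of "L * u" "L * count_deviation \<omega>"] by (simp add: power_mult_distrib)
    also have "2 * L\<^sup>2 * u\<^sup>2 \<le> 2 * L\<^sup>2 * ((2 * lam / n) * (\<Sum>i\<in>{1..K}. (drift i \<omega>)\<^sup>2))"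
    proof (intro mult_left_mono)
      have "u\<^sup>2 \<le> (1 / real M)\<^sup>2 * ((\<Sum>i=1..M. (\<bar>drift i \<omega>\<bar>)\<^sup>2) * real M)"
        unfolding u_def power_mult_distrib
        using sum_squared_le_sum_of_squares[of "\<lambda>i. \<bar>drift i \<omega>\<bar>" "{1..M}"] by (intro mult_left_mono) auto
      also have "\<dots> = (1 / real M) * (\<Sum>i=1..M. (drift i \<omega>)\<^sup>2)" using M1 by (simp add: power2_eq_square)
      also have "\<dots> \<le> (2 * lam / n) * (\<Sum>i\<in>{1..K}. (drift i \<omega>)\<^sup>2)"
        using inverse_count_le[OF M1 n_pos] M_lower that lam_gt_1 n_pos
        by (intro mult_mono sum_mono2) (auto simp: sum_nonneg)
      finally show "u\<^sup>2 \<le> (2 * lam / n) * (\<Sum>i\<in>{1..K}. (drift i \<omega>)\<^sup>2)" .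
    qed simp
    finally show ?thesis by (simp add: ac_simps)
  qed
  moreover have "(4 + 2 * L\<^sup>2) * (min 1 (count_deviation \<omega>))\<^sup>2 \<ge> 4" if "M > K \<or> count_deviation \<omega> > 1"
  proof -
    have "real M > 2 * n \<or> count_deviation \<omega> > 1" using that unfolding K_def by linarith
    hence "count_deviation \<omega> > 1" using n_pos by (auto simp: count_deviation_def M_def field_simps)
    thus ?thesis by simp
  qed
  moreover have "2 * L\<^sup>2 * (count_deviation \<omega>)\<^sup>2 \<le> (4 + 2 * L\<^sup>2) * (min 1 (count_deviation \<omega>))\<^sup>2"
    if "count_deviation \<omega> \<le> 1"
    using that by (intro mult_mono) (auto simp: count_deviation_def)
  ultimately show ?thesis
    using bias_4 drift_nonneg unfolding L_def K_def by (smt (verit) not_le)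
qed

lemma expectation_bias_sq:
  assumes k: "k \<in> {- int b..int b}"
  shows "integrable P (\<lambda>\<omega>. (cmod (bias k \<omega>))\<^sup>2)"
    and "expectation (\<lambda>\<omega>. (cmod (bias k \<omega>))\<^sup>2) \<le> 4"
    and "n \<ge> bias_threshold b lam \<Longrightarrow> expectation (\<lambda>\<omega>. (cmod (bias k \<omega>))\<^sup>2) \<le> bias_const b lam / n"
proof -
  let ?L = "lipschitz_bound b" and ?K = "nat \<lceil>2 * n\<rceil>"
  have bias_4: "(cmod (bias k \<omega>))\<^sup>2 \<le> 4" for \<omega>
    using power_mono[OF norm_bias_le_2[of k \<omega>] norm_ge_zero, of 2] by simp
  show int: "integrable P (\<lambda>\<omega>. (cmod (bias k \<omega>))\<^sup>2)"
    by (rule integrable_const_bound[where B = 4]) (auto simp: bias_4)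
  have "expectation (\<lambda>\<omega>. (cmod (bias k \<omega>))\<^sup>2) \<le> expectation (\<lambda>\<omega>. 4)"
    by (intro integral_mono int bias_4) auto
  thus "expectation (\<lambda>\<omega>. (cmod (bias k \<omega>))\<^sup>2) \<le> 4" by (simp add: prob_space)
  assume n_ge: "n \<ge> bias_threshold b lam"
  hence n4: "n \<ge> 4" by (simp add: bias_threshold_def)
  let ?R = "\<lambda>\<omega>. (4 * lam * ?L\<^sup>2 / n) * (\<Sum>i\<in>{1..?K}. (drift i \<omega>)\<^sup>2) + (4 + 2 * ?L\<^sup>2) * (min 1 (count_deviation \<omega>))\<^sup>2"
  have int_R: "integrable P ?R"
    by (intro Bochner_Integration.integrable_add Bochner_Integration.integrable_mult_right
        Bochner_Integration.integrable_sum expectation_drift_sq(1) expectation_count_deviation_sq(1)[OF n4])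
  have "expectation (\<lambda>\<omega>. (cmod (bias k \<omega>))\<^sup>2) \<le> expectation ?R"
  proof (intro integral_mono_AE int int_R)
    show "AE \<omega> in P. (cmod (bias k \<omega>))\<^sup>2 \<le> ?R \<omega>"
      using AE_typical by (rule eventually_mono) (rule typical_bias_sq_le[OF _ n_ge k])
  qed
  also have "expectation ?R = (4 * lam * ?L\<^sup>2 / n) * (\<Sum>i\<in>{1..?K}. expectation (\<lambda>\<omega>. (drift i \<omega>)\<^sup>2))
       + (4 + 2 * ?L\<^sup>2) * expectation (\<lambda>\<omega>. (min 1 (count_deviation \<omega>))\<^sup>2)"
    by (simp add: Bochner_Integration.integral_add Bochner_Integration.integrable_sum expectation_drift_sq(1)
        expectation_count_deviation_sq(1)[OF n4] Bochner_Integration.integral_sum)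
  also have "\<dots> \<le> (4 * lam * ?L\<^sup>2 / n) * (9 * lam\<^sup>2) + (4 + 2 * ?L\<^sup>2) * ((\<Sum>j. gauss_tail_weight lam j) / n)"
    by (intro add_mono mult_left_mono expectation_count_deviation_sq(2)[OF n4] sum_expectation_drift_sq_le[OF n4])
       (use lam_gt_1 n_pos in auto)
  also have "\<dots> = bias_const b lam / n"
    using n_pos by (simp add: bias_const_def field_simps power2_eq_square power3_eq_cube)
  finally show "expectation (\<lambda>\<omega>. (cmod (bias k \<omega>))\<^sup>2) \<le> bias_const b lam / n" .
qed

lemma expectation_error_sq:
  assumes k: "k \<in> {- int b..int b}"
  shows "integrable P (\<lambda>\<omega>. (cmod (Ahat g X Z k \<omega> - fcoef g k))\<^sup>2)"
    and "expectation (\<lambda>\<omega>. (cmod (Ahat g X Z k \<omega> - fcoef g k))\<^sup>2) \<le> error_const b lam \<sigma>2 / n"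
proof -
  let ?B = "\<lambda>\<omega>. (cmod (bias k \<omega>))\<^sup>2" and ?N = "\<lambda>\<omega>. (cmod (noise_avg k (renM X \<omega>) \<omega>))\<^sup>2"
  have pointwise: "(cmod (Ahat g X Z k \<omega> - fcoef g k))\<^sup>2 \<le> 2 * ?B \<omega> + 2 * ?N \<omega>" for \<omega>
  proof -
    have "(cmod (Ahat g X Z k \<omega> - fcoef g k))\<^sup>2 \<le> (cmod (bias k \<omega>) + cmod (noise_avg k (renM X \<omega>) \<omega>))\<^sup>2"
      unfolding Ahat_minus_fcoef by (intro power_mono norm_triangle_ineq) simp
    thus ?thesis using square_add_le order_trans by blast
  qed
  have int_BN: "integrable P (\<lambda>\<omega>. 2 * ?B \<omega> + 2 * ?N \<omega>)"
    using expectation_bias_sq(1)[OF k] expectation_noise_avg_renM_sq(1)[of k] by simp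
  show int: "integrable P (\<lambda>\<omega>. (cmod (Ahat g X Z k \<omega> - fcoef g k))\<^sup>2)"
    by (rule Bochner_Integration.integrable_bound[OF int_BN]) (auto intro!: AE_I2 order_trans[OF _ pointwise])
  have "expectation (\<lambda>\<omega>. (cmod (Ahat g X Z k \<omega> - fcoef g k))\<^sup>2) \<le> expectation (\<lambda>\<omega>. 2 * ?B \<omega> + 2 * ?N \<omega>)"
    by (intro integral_mono int int_BN pointwise)
  also have "\<dots> = 2 * expectation ?B + 2 * expectation ?N"
    using expectation_bias_sq(1)[OF k] expectation_noise_avg_renM_sq(1)[of k] by simp
  also have "\<dots> \<le> error_const b lam \<sigma>2 / n"
  proof -
    have N: "2 * expectation ?N \<le> 4 * lam * \<sigma>2 / n"
      using expectation_noise_avg_renM_sq(2)[of k] by simp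
    have B: "2 * expectation ?B \<le> (8 * bias_threshold b lam + 2 * bias_const b lam) / n"
    proof (cases "n \<ge> bias_threshold b lam")
      case True
      have "0 \<le> 8 * bias_threshold b lam / n" using n_pos by (simp add: bias_threshold_def)
      thus ?thesis using expectation_bias_sq(3)[OF k True] by (simp add: add_divide_distrib)
    next
      case False
      have "bias_const b lam \<ge> 0"
        using lam_gt_1 summable_gauss_tail_weight[of lam]
        by (auto simp: bias_const_def intro!: add_nonneg_nonneg mult_nonneg_nonneg suminf_nonneg gauss_tail_weight_nonneg)
      hence "0 \<le> 2 * bias_const b lam / n" using n_pos by simp
      moreover have "8 \<le> 8 * bias_threshold b lam / n" using False n_pos by (simp add: field_simps)
      ultimately show ?thesis
        using expectation_bias_sq(2)[OF k] by (simp add: add_divide_distrib)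
    qed
    show ?thesis using N B unfolding error_const_def by (simp add: add_divide_distrib)
  qed
  finally show "expectation (\<lambda>\<omega>. (cmod (Ahat g X Z k \<omega> - fcoef g k))\<^sup>2) \<le> error_const b lam \<sigma>2 / n" .
qed

lemma distortion_eq_sum_coefficient_errors:
  "(LBINT x:{0..1}. (cmod (Ghat b g X Z x \<omega> - complex_of_real (g x)))\<^sup>2)
     = (\<Sum>k=- int b..int b. (cmod (Ahat g X Z k \<omega> - fcoef g k))\<^sup>2)"
proof -
  have "Ghat b g X Z x \<omega> - complex_of_real (g x)
     = (\<Sum>k=- int b..int b. (Ahat g X Z k \<omega> - fcoef g k) * exp (\<i> * of_real (2 * pi * of_int k * x)))" for x
    unfolding Ghat_def g_expansion[of x] by (simp add: sum_subtractf[symmetric] left_diff_distrib)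
  thus ?thesis by (simp only: parseval_trig_poly)
qed

lemma expectation_distortion:
  "expectation (\<lambda>\<omega>. LBINT x:{0..1}. (cmod (Ghat b g X Z x \<omega> - complex_of_real (g x)))\<^sup>2)
     = (\<Sum>k=- int b..int b. expectation (\<lambda>\<omega>. (cmod (Ahat g X Z k \<omega> - fcoef g k))\<^sup>2))"
  unfolding distortion_eq_sum_coefficient_errors
  by (rule Bochner_Integration.integral_sum) (rule expectation_error_sq(1), simp)

end

theorem theorem1:
  fixes b :: nat and lam \<sigma>2 :: real
  assumes "b \<ge> 1" and "lam > 1" and "\<sigma>2 \<ge> 0"
  shows "\<exists>C::real. \<forall>(P::'a measure) (g::real \<Rightarrow> real) (n::real) (X::nat \<Rightarrow> 'a \<Rightarrow> real) (Z::nat \<Rightarrow> 'a \<Rightarrow> real).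
     prob_space P \<and> n > 0
     \<and> (\<forall>x. g (x + 1) = g x) \<and> (\<forall>x. \<bar>g x\<bar> \<le> 1)
     \<and> (\<forall>x. complex_of_real (g x) = (\<Sum>k=- int b..int b. fcoef g k * exp (\<i> * of_real (2 * pi * of_int k * x))))
     \<and> prob_space.indep_vars P (\<lambda>_. borel) (\<lambda>i. case i of Inl m \<Rightarrow> X m | Inr m \<Rightarrow> Z m) UNIV
     \<and> (\<forall>m. distr P borel (X m) = distr P borel (X 0))
     \<and> (\<forall>m. distr P borel (Z m) = distr P borel (Z 0))
     \<and> (AE \<omega> in P. 0 < X 0 \<omega> \<and> X 0 \<omega> \<le> lam / n)
     \<and> integral\<^sup>L P (X 0) = 1 / n
     \<and> integrable P (\<lambda>\<omega>. (Z 0 \<omega>)\<^sup>2)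
     \<and> integral\<^sup>L P (Z 0) = 0
     \<and> integral\<^sup>L P (\<lambda>\<omega>. (Z 0 \<omega>)\<^sup>2) = \<sigma>2
     \<longrightarrow> (\<forall>k\<in>{- int b..int b}.
             integral\<^sup>L P (\<lambda>\<omega>. (cmod (Ahat g X Z k \<omega> - fcoef g k))\<^sup>2) \<le> C / n)
       \<and> integral\<^sup>L P (\<lambda>\<omega>. LBINT x:{0..1}. (cmod (Ghat b g X Z x \<omega> - complex_of_real (g x)))\<^sup>2)
           = (\<Sum>k=- int b..int b. integral\<^sup>L P (\<lambda>\<omega>. (cmod (Ahat g X Z k \<omega> - fcoef g k))\<^sup>2))
       \<and> integral\<^sup>L P (\<lambda>\<omega>. LBINT x:{0..1}. (cmod (Ghat b g X Z x \<omega> - complex_of_real (g x)))\<^sup>2)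
           \<le> (2 * real b + 1) * C / n"
proof (intro exI[of _ "error_const b lam \<sigma>2"] allI impI)
  fix P :: "'a measure" and g :: "real \<Rightarrow> real" and n :: real and X Z :: "nat \<Rightarrow> 'a \<Rightarrow> real"
  assume "prob_space P \<and> n > 0
     \<and> (\<forall>x. g (x + 1) = g x) \<and> (\<forall>x. \<bar>g x\<bar> \<le> 1)
     \<and> (\<forall>x. complex_of_real (g x) = (\<Sum>k=- int b..int b. fcoef g k * exp (\<i> * of_real (2 * pi * of_int k * x))))
     \<and> prob_space.indep_vars P (\<lambda>_. borel) (\<lambda>i. case i of Inl m \<Rightarrow> X m | Inr m \<Rightarrow> Z m) UNIV
     \<and> (\<forall>m. distr P borel (X m) = distr P borel (X 0))
     \<and> (\<forall>m. distr P borel (Z m) = distr P borel (Z 0))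
     \<and> (AE \<omega> in P. 0 < X 0 \<omega> \<and> X 0 \<omega> \<le> lam / n)
     \<and> integral\<^sup>L P (X 0) = 1 / n
     \<and> integrable P (\<lambda>\<omega>. (Z 0 \<omega>)\<^sup>2)
     \<and> integral\<^sup>L P (Z 0) = 0
     \<and> integral\<^sup>L P (\<lambda>\<omega>. (Z 0 \<omega>)\<^sup>2) = \<sigma>2"
  then interpret bandlimited_renewal_sampling P lam n \<sigma>2 X Z b g
    using \<open>lam > 1\<close>
    by (simp add: bandlimited_renewal_sampling_def renewal_sampling_def renewal_sampling_axioms_def
        bandlimited_renewal_sampling_axioms_def)
  let ?E = "\<lambda>k. expectation (\<lambda>\<omega>. (cmod (Ahat g X Z k \<omega> - fcoef g k))\<^sup>2)"
  have "(\<Sum>k=- int b..int b. ?E k) \<le> (\<Sum>k=- int b..int b. error_const b lam \<sigma>2 / n)"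
    by (intro sum_mono expectation_error_sq(2))
  thus "(\<forall>k\<in>{- int b..int b}. ?E k \<le> error_const b lam \<sigma>2 / n)
      \<and> expectation (\<lambda>\<omega>. LBINT x:{0..1}. (cmod (Ghat b g X Z x \<omega> - complex_of_real (g x)))\<^sup>2) = (\<Sum>k=- int b..int b. ?E k)
      \<and> expectation (\<lambda>\<omega>. LBINT x:{0..1}. (cmod (Ghat b g X Z x \<omega> - complex_of_real (g x)))\<^sup>2)
          \<le> (2 * real b + 1) * error_const b lam \<sigma>2 / n"
    using expectation_error_sq(2) by (simp add: expectation_distortion)
qed

end
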